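(* Let $(G,N,\theta)_{\mathcal H}$ and $(H,M,\varphi)_{\mathcal H}$ be $\mathcal H$-triples with $H\le G$ satisfying: (i) $G=NH$, $N\cap H=M$, $\mathbf C_G(N)\subseteq H$; and (ii) $(H\times\mathcal H)_\theta=(H\times\mathcal H)_\varphi$. Write $A=(H\times\mathcal H)_\theta$. Let $\mathcal P$ and $\mathcal P'$ be projective representations of $G_\theta$ and $H_\varphi$ associated with $\theta$ and $\varphi$ respectively, with entries in $\mathbb Q^{\mathrm{ab}}$, whose factor sets $\alpha,\alpha'$ take root-of-unity values, with $\alpha$ and $\alpha'$ equal on $H_\theta\times H_\theta$, and such that for each $c\in\mathbf C_G(N)$ the scalar matrices $\mathcal P(c)$ and $\mathcal P'(c)$ correspond to the same scalar. Then the condition "$\mu_a$ and $\mu'_a$ agree on $H_\theta$" holds for every $a\in A$ if and only if it holds for every $a$ in some complete set of representatives of the cosets of $H_\theta$ (identified with $H_\theta\times\{1\}$) in $A$.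
   Context: All groups are finite; $p$ is a fixed prime. $\mathbb Q^{\mathrm{ab}}\subseteq\mathbb C$ is generated by all roots of unity, $\mathcal G=\mathrm{Gal}(\mathbb Q^{\mathrm{ab}}/\mathbb Q)$, $\mathcal H\le\mathcal G$ consists of those $\sigma$ for which there is an integer $f$ with $\sigma(\xi)=\xi^{p^f}$ for all roots of unity $\xi$ of order prime to $p$. For $N\trianglelefteq G$, $\theta\in\mathrm{Irr}(N)$, $g\in G$, $\sigma\in\mathcal G$: $\theta^{g\sigma}(n)=\sigma(\theta(gng^{-1}))$; $(H\times\mathcal H)_\theta$ is the stabilizer; $\theta^{\mathcal H}$ the $\mathcal H$-orbit; $G_{\theta^{\mathcal H}}=\{g:\theta^g\in\theta^{\mathcal H}\}$. $(G,N,\theta)_{\mathcal H}$ is an $\mathcal H$-triple if $N\trianglelefteq G$, $\theta\in\mathrm{Irr}(N)$, $G_{\theta^{\mathcal H}}=G$. Projective representation $\mathcal P$ with factor set $\alpha$: $\mathcal P(x)\mathcal P(y)=\alpha(x,y)\mathcal P(xy)$. For $G$-invariant $\theta$, $\mathcal P$ is associated with $\theta$ if $\mathcal P_N$ affords $\theta$ and $\mathcal P(ng)=\mathcal P(n)\mathcal P(g)$, $\mathcal P(gn)=\mathcal P(g)\mathcal P(n)$. For $a=(x,\sigma)$ with $\theta^{x\sigma}=\theta$, $\mathcal P^{a}(y)=\sigma(\mathcal P(xyx^{-1}))$ (entrywise), and $\mu_a:G_\theta\to\mathbb C^\times$ is the unique function, constant on $N$-cosets, $\mu_a(1)=1$,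 such that $\mathcal P^a(y)=\mu_a(y)L^{-1}\mathcal P(y)L$ for all $y$ and some invertible $L$; $\mu'_a:H_\varphi\to\mathbb C^\times$ is defined in the same way from $\mathcal P'$ and $\varphi$. *)

theory Defs
  imports "HOL-Algebra.Algebra" "Jordan_Normal_Form.Matrix"
begin

definition root_of_unity :: "complex \<Rightarrow> bool" where
  "root_of_unity z \<longleftrightarrow> (\<exists>n::nat. n > 0 \<and> z ^ n = 1)"

definition is_subfield :: "complex set \<Rightarrow> bool" where
  "is_subfield K \<longleftrightarrow> 0 \<in> K \<and> 1 \<in> K \<and> (\<forall>x\<in>K. \<forall>y\<in>K. x + y \<in> K \<and> x * y \<in> K)
     \<and> (\<forall>x\<in>K. - x \<in> K \<and> inverse x \<in> K)"

definition Qab :: "complex set" where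
  "Qab = \<Inter>{K. is_subfield K \<and> {z. root_of_unity z} \<subseteq> K}"

text \<open>The Galois group Gal(Q^ab/Q): field automorphisms of Q^ab (they fix Q automatically),
  normalised to be the identity outside Q^ab.\<close>
definition Gal_ab :: "(complex \<Rightarrow> complex) set" where
  "Gal_ab = {\<sigma>. bij_betw \<sigma> Qab Qab \<and> (\<forall>x\<in>Qab. \<forall>y\<in>Qab. \<sigma> (x + y) = \<sigma> x + \<sigma> y \<and> \<sigma> (x * y) = \<sigma> x * \<sigma> y)
        \<and> (\<forall>z. z \<notin> Qab \<longrightarrow> \<sigma> z = z)}"

text \<open>The subgroup \<H>: there is an integer f with \<sigma>(\<xi>) = \<xi>^(p^f) for all roots of unity \<xi>
  of order prime to p (for f < 0, \<xi>^(p^f) means the unique \<eta> of order prime to p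
  with \<eta>^(p^(-f)) = \<xi>).\<close>
definition Hgal :: "nat \<Rightarrow> (complex \<Rightarrow> complex) set" where
  "Hgal p = {\<sigma>\<in>Gal_ab. \<exists>f::int. \<forall>\<xi>. \<forall>n::nat. n > 0 \<and> coprime n p \<and> \<xi> ^ n = 1 \<longrightarrow>
      (if f \<ge> 0 then \<sigma> \<xi> = \<xi> ^ (p ^ nat f) else (\<sigma> \<xi>) ^ (p ^ nat (- f)) = \<xi>)}"

definition mtrace :: "complex mat \<Rightarrow> complex" where
  "mtrace A = (\<Sum>i<dim_row A. A $$ (i, i))"

definition is_rep :: "('g, 'b) monoid_scheme \<Rightarrow> 'g set \<Rightarrow> nat \<Rightarrow> ('g \<Rightarrow> complex mat) \<Rightarrow> bool" where
  "is_rep G N n \<rho> \<longleftrightarrow> (\<forall>x\<in>N. \<rho> x \<in> carrier_mat n n) \<and> \<rho> \<one>\<^bsub>G\<^esub> = 1\<^sub>m n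
     \<and> (\<forall>x\<in>N. \<forall>y\<in>N. \<rho> (x \<otimes>\<^bsub>G\<^esub> y) = \<rho> x * \<rho> y)"

definition is_cvsubspace :: "nat \<Rightarrow> complex vec set \<Rightarrow> bool" where
  "is_cvsubspace n W \<longleftrightarrow> W \<subseteq> carrier_vec n \<and> 0\<^sub>v n \<in> W
     \<and> (\<forall>v\<in>W. \<forall>w\<in>W. v + w \<in> W) \<and> (\<forall>c. \<forall>v\<in>W. c \<cdot>\<^sub>v v \<in> W)"

definition irr_rep :: "('g, 'b) monoid_scheme \<Rightarrow> 'g set \<Rightarrow> nat \<Rightarrow> ('g \<Rightarrow> complex mat) \<Rightarrow> bool" where
  "irr_rep G N n \<rho> \<longleftrightarrow> n > 0 \<and> is_rep G N n \<rho> \<and>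
     (\<forall>W. is_cvsubspace n W \<and> (\<forall>x\<in>N. \<forall>w\<in>W. \<rho> x *\<^sub>v w \<in> W) \<longrightarrow> W = {0\<^sub>v n} \<or> W = carrier_vec n)"

text \<open>\<theta> \<in> Irr(N) (values only relevant on N).\<close>
definition irr_char :: "('g, 'b) monoid_scheme \<Rightarrow> 'g set \<Rightarrow> ('g \<Rightarrow> complex) \<Rightarrow> bool" where
  "irr_char G N \<theta> \<longleftrightarrow> (\<exists>n \<rho>. irr_rep G N n \<rho> \<and> (\<forall>x\<in>N. \<theta> x = mtrace (\<rho> x)))"

definition char_act :: "('g, 'b) monoid_scheme \<Rightarrow> ('g \<Rightarrow> complex) \<Rightarrow> 'g \<Rightarrow> (complex \<Rightarrow> complex) \<Rightarrow> 'g \<Rightarrow> complex" where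
  "char_act G \<theta> g \<sigma> = (\<lambda>n. \<sigma> (\<theta> (g \<otimes>\<^bsub>G\<^esub> n \<otimes>\<^bsub>G\<^esub> inv\<^bsub>G\<^esub> g)))"

definition fixes_char :: "('g, 'b) monoid_scheme \<Rightarrow> 'g set \<Rightarrow> ('g \<Rightarrow> complex) \<Rightarrow> 'g \<Rightarrow> (complex \<Rightarrow> complex) \<Rightarrow> bool" where
  "fixes_char G N \<theta> g \<sigma> \<longleftrightarrow> (\<forall>n\<in>N. char_act G \<theta> g \<sigma> n = \<theta> n)"

definition stab_pair :: "nat \<Rightarrow> ('g, 'b) monoid_scheme \<Rightarrow> 'g set \<Rightarrow> 'g set \<Rightarrow> ('g \<Rightarrow> complex) \<Rightarrow> ('g \<times> (complex \<Rightarrow> complex)) set" where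
  "stab_pair p G H N \<theta> = {(x, \<sigma>). x \<in> H \<and> \<sigma> \<in> Hgal p \<and> fixes_char G N \<theta> x \<sigma>}"

definition stab :: "('g, 'b) monoid_scheme \<Rightarrow> 'g set \<Rightarrow> 'g set \<Rightarrow> ('g \<Rightarrow> complex) \<Rightarrow> 'g set" where
  "stab G H N \<theta> = {x \<in> H. fixes_char G N \<theta> x id}"

definition stab_orbit :: "nat \<Rightarrow> ('g, 'b) monoid_scheme \<Rightarrow> 'g set \<Rightarrow> 'g set \<Rightarrow> ('g \<Rightarrow> complex) \<Rightarrow> 'g set" where
  "stab_orbit p G H N \<theta> = {g \<in> H. \<exists>\<sigma>\<in>Hgal p. \<forall>n\<in>N. char_act G \<theta> g id n = \<sigma> (\<theta> n)}"

definition H_triple :: "nat \<Rightarrow> ('g, 'b) monoid_scheme \<Rightarrow> 'g set \<Rightarrow> 'g set \<Rightarrow> ('g \<Rightarrow> complex) \<Rightarrow> bool" where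
  "H_triple p G H N \<theta> \<longleftrightarrow> subgroup H G \<and> N \<lhd> (G\<lparr>carrier := H\<rparr>) \<and> irr_char G N \<theta>
      \<and> stab_orbit p G H N \<theta> = H"

definition centralizer_in :: "('g, 'b) monoid_scheme \<Rightarrow> 'g set \<Rightarrow> 'g set" where
  "centralizer_in G N = {g \<in> carrier G. \<forall>n\<in>N. g \<otimes>\<^bsub>G\<^esub> n = n \<otimes>\<^bsub>G\<^esub> g}"

definition proj_rep :: "('g, 'b) monoid_scheme \<Rightarrow> 'g set \<Rightarrow> nat \<Rightarrow> ('g \<Rightarrow> complex mat) \<Rightarrow> ('g \<Rightarrow> 'g \<Rightarrow> complex) \<Rightarrow> bool" where
  "proj_rep G S d P \<alpha> \<longleftrightarrow> (\<forall>x\<in>S. P x \<in> carrier_mat d d \<and> invertible_mat (P x))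
     \<and> (\<forall>x\<in>S. \<forall>y\<in>S. P x * P y = \<alpha> x y \<cdot>\<^sub>m P (x \<otimes>\<^bsub>G\<^esub> y))"

definition assoc_proj :: "('g, 'b) monoid_scheme \<Rightarrow> 'g set \<Rightarrow> 'g set \<Rightarrow> ('g \<Rightarrow> complex) \<Rightarrow> nat \<Rightarrow> ('g \<Rightarrow> complex mat) \<Rightarrow> bool" where
  "assoc_proj G S N \<theta> d P \<longleftrightarrow> is_rep G N d P \<and> (\<forall>n\<in>N. mtrace (P n) = \<theta> n)
     \<and> (\<forall>n\<in>N. \<forall>g\<in>S. P (n \<otimes>\<^bsub>G\<^esub> g) = P n * P g \<and> P (g \<otimes>\<^bsub>G\<^esub> n) = P g * P n)"

definition mu_cond :: "('g, 'b) monoid_scheme \<Rightarrow> 'g set \<Rightarrow> 'g set \<Rightarrow> nat \<Rightarrow> ('g \<Rightarrow> complex mat)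
     \<Rightarrow> 'g \<times> (complex \<Rightarrow> complex) \<Rightarrow> ('g \<Rightarrow> complex) \<Rightarrow> bool" where
  "mu_cond G S N d P a \<mu> \<longleftrightarrow> \<mu> \<in> extensional S \<and> (\<forall>y\<in>S. \<mu> y \<noteq> 0) \<and> \<mu> \<one>\<^bsub>G\<^esub> = 1
     \<and> (\<forall>y\<in>S. \<forall>n\<in>N. \<mu> (n \<otimes>\<^bsub>G\<^esub> y) = \<mu> y)
     \<and> (\<exists>L Linv. L \<in> carrier_mat d d \<and> Linv \<in> carrier_mat d d \<and> L * Linv = 1\<^sub>m d \<and> Linv * L = 1\<^sub>m d
          \<and> (\<forall>y\<in>S. map_mat (snd a) (P (fst a \<otimes>\<^bsub>G\<^esub> y \<otimes>\<^bsub>G\<^esub> inv\<^bsub>G\<^esub> (fst a)))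
                     = \<mu> y \<cdot>\<^sub>m (Linv * P y * L)))"

definition mu :: "('g, 'b) monoid_scheme \<Rightarrow> 'g set \<Rightarrow> 'g set \<Rightarrow> nat \<Rightarrow> ('g \<Rightarrow> complex mat)
     \<Rightarrow> 'g \<times> (complex \<Rightarrow> complex) \<Rightarrow> 'g \<Rightarrow> complex" where
  "mu G S N d P a = (THE \<mu>. mu_cond G S N d P a \<mu>)"

text \<open>T is a complete set of representatives of the (right) cosets of H_\<theta> \<times> {1} in A.\<close>
definition coset_transversal :: "('g, 'b) monoid_scheme \<Rightarrow> 'g set \<Rightarrow> ('g \<times> (complex \<Rightarrow> complex)) set
     \<Rightarrow> ('g \<times> (complex \<Rightarrow> complex)) set \<Rightarrow> bool" where
  "coset_transversal G K A T \<longleftrightarrow> T \<subseteq> A \<and>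
     (\<forall>a\<in>A. \<exists>!t. t \<in> T \<and> (\<exists>h\<in>K. a = (h \<otimes>\<^bsub>G\<^esub> fst t, snd t)))"

end

theory Submission
  imports Defs "Jordan_Normal_Form.Spectral_Radius"
begin

(*
  For a = (x, \<sigma>) the matrices y \<mapsto> \<sigma>(P(x y x\<inverse>)) form again a projective representation
  of G_\<theta>, and since \<theta> is fixed by (x, \<sigma>) their restriction to N has the same character as
  that of P. The restriction of P to N is irreducible, so by Schur's lemma the two projective
  representations are similar up to a scalar function, and this function is the unique \<mu>_a.
  Conjugating by P(k) for k in H_\<theta> gives
    \<mu>_(k x, \<sigma>)(y) = \<mu>_(x, \<sigma>)(y) \<sigma>(c(k, x y x\<inverse>)),   c(k, z) = \<alpha>(k, k\<inverse>) / (\<alpha>(k, z) \<alpha>(k z, k\<inverse>)),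
  and c only involves values of \<alpha> on H_\<theta>, where \<alpha> = \<alpha>'. Hence \<mu> and \<mu>' obey the same rule,
  so whether \<mu>_a and \<mu>'_a agree on H_\<theta> only depends on the coset H_\<theta> a, and a transversal
  suffices.
*)

lemma smult_smult_mat [simp]: "a \<cdot>\<^sub>m (b \<cdot>\<^sub>m A) = (a * b :: 'a :: semigroup_mult) \<cdot>\<^sub>m A"
  by (rule eq_matI) (auto simp: mult.assoc)

lemma one_smult_mat [simp]: "(1 :: 'a :: monoid_mult) \<cdot>\<^sub>m A = A"
  by (rule eq_matI) auto

lemma zero_smult_mat: "A \<in> carrier_mat n m \<Longrightarrow> (0 :: 'a :: semiring_0) \<cdot>\<^sub>m A = 0\<^sub>m n m"
  by (rule eq_matI) auto

lemma smult_one_mat_mult: "A \<in> carrier_mat n m \<Longrightarrow> (c \<cdot>\<^sub>m 1\<^sub>m n) * A = (c :: 'a :: comm_ring_1) \<cdot>\<^sub>m A"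
  by (simp add: mult_smult_assoc_mat[of _ n n])

lemma mult_smult_one_mat: "A \<in> carrier_mat m n \<Longrightarrow> A * (c \<cdot>\<^sub>m 1\<^sub>m n) = (c :: 'a :: comm_ring_1) \<cdot>\<^sub>m A"
  using mult_smult_distrib[of A m n "1\<^sub>m n" n c] by simp

lemma mult_inverse_cancel_left:
  "A * B = 1\<^sub>m n \<Longrightarrow> A \<in> carrier_mat n n \<Longrightarrow> B \<in> carrier_mat n n \<Longrightarrow> W \<in> carrier_mat n m \<Longrightarrow>
   A * (B * W) = (W :: 'a :: semiring_1 mat)"
  using assoc_mult_mat[of A n n B n W m] by simp

lemma smult_mat_cancel:
  assumes A: "A \<in> carrier_mat n m" and nz: "A \<noteq> 0\<^sub>m n m" and eq: "a \<cdot>\<^sub>m A = (b :: 'a :: idom) \<cdot>\<^sub>m A"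
  shows "a = b"
proof -
  obtain i j where ij: "i < n" "j < m" "A $$ (i, j) \<noteq> 0"
  proof (rule ccontr)
    assume "\<not> thesis"
    with that have "A = 0\<^sub>m n m" using A by (intro eq_matI) auto
    with nz show False ..
  qed
  have "a * A $$ (i, j) = b * A $$ (i, j)"
    using arg_cong[OF eq, of "\<lambda>B. B $$ (i, j)"] ij A by simp
  thus ?thesis using ij by simp
qed

lemma one_mat_neq_zero: "n > 0 \<Longrightarrow> 1\<^sub>m n \<noteq> (0\<^sub>m n n :: 'a :: zero_neq_one mat)"
  by (metis index_one_mat(1) index_zero_mat(1) zero_neq_one)

definition mat_inverse_pair :: "nat \<Rightarrow> 'a :: semiring_1 mat \<Rightarrow> 'a mat \<Rightarrow> bool" where
  "mat_inverse_pair n A B \<longleftrightarrow> A \<in> carrier_mat n n \<and> B \<in> carrier_mat n n \<and> A * B = 1\<^sub>m n \<and> B * A = 1\<^sub>m n"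

lemma invertible_mat_inverse_pair:
  assumes A: "A \<in> carrier_mat n n" and inv: "invertible_mat A"
  obtains B where "mat_inverse_pair n A B"
proof -
  obtain B where AB: "A * B = 1\<^sub>m n" and BA: "B * A = 1\<^sub>m (dim_row B)"
    using inv A unfolding invertible_mat_def inverts_mat_def by auto
  have "dim_col B = n" "dim_row B = n"
    using arg_cong[OF AB, of dim_col] arg_cong[OF BA, of dim_col] A by simp_all
  hence "B \<in> carrier_mat n n" by blast
  with A AB BA show ?thesis using that unfolding mat_inverse_pair_def by auto
qed

lemma mtrace_one_mat [simp]: "mtrace (1\<^sub>m n) = of_nat n"
  unfolding mtrace_def by simp

lemma mtrace_smult_one_mat: "mtrace (c \<cdot>\<^sub>m 1\<^sub>m n) = c * of_nat n"
  unfolding mtrace_def by simp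

lemma mtrace_mult_comm:
  assumes "A \<in> carrier_mat n n" "B \<in> carrier_mat n n"
  shows "mtrace (A * B) = mtrace (B * A)"
proof -
  have "mtrace (A * B) = (\<Sum>i<n. \<Sum>k<n. A $$ (i, k) * B $$ (k, i))"
    using assms unfolding mtrace_def by (simp add: scalar_prod_def atLeast0LessThan)
  also have "\<dots> = (\<Sum>k<n. \<Sum>i<n. B $$ (k, i) * A $$ (i, k))"
    by (subst sum.swap) (simp add: mult.commute)
  also have "\<dots> = mtrace (B * A)"
    using assms unfolding mtrace_def by (simp add: scalar_prod_def atLeast0LessThan)
  finally show ?thesis .
qed

section \<open>Schur's lemma and characters\<close>

lemma is_cvsubspace_carrier_vec: "is_cvsubspace n (carrier_vec n)"
  unfolding is_cvsubspace_def by auto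

lemma is_cvsubspace_image:
  assumes T: "T \<in> carrier_mat n n" and W: "is_cvsubspace n W"
  shows "is_cvsubspace n ((\<lambda>w. T *\<^sub>v w) ` W)"
  unfolding is_cvsubspace_def
proof (intro conjI ballI allI)
  have Wc: "W \<subseteq> carrier_vec n" and W0: "0\<^sub>v n \<in> W"
    and Wadd: "\<And>v w. v \<in> W \<Longrightarrow> w \<in> W \<Longrightarrow> v + w \<in> W"
    using W unfolding is_cvsubspace_def by auto
  show "(\<lambda>w. T *\<^sub>v w) ` W \<subseteq> carrier_vec n" using T Wc by auto
  show "0\<^sub>v n \<in> (\<lambda>w. T *\<^sub>v w) ` W" using T W0 by (intro image_eqI[of _ _ "0\<^sub>v n"]) auto
  fix u v assume "u \<in> (\<lambda>w. T *\<^sub>v w) ` W" "v \<in> (\<lambda>w. T *\<^sub>v w) ` W"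
  then obtain u' v' where "u' \<in> W" "v' \<in> W" "u = T *\<^sub>v u'" "v = T *\<^sub>v v'" by auto
  moreover have "u' \<in> carrier_vec n" "v' \<in> carrier_vec n" using calculation Wc by auto
  ultimately show "u + v \<in> (\<lambda>w. T *\<^sub>v w) ` W"
    using Wadd by (intro image_eqI[of _ _ "u' + v'"]) (auto simp: mult_add_distrib_mat_vec[OF T])
next
  fix c v assume "v \<in> (\<lambda>w. T *\<^sub>v w) ` W"
  then obtain v' where "v' \<in> W" "v = T *\<^sub>v v'" by auto
  then show "c \<cdot>\<^sub>v v \<in> (\<lambda>w. T *\<^sub>v w) ` W"
    using T W unfolding is_cvsubspace_def
    by (intro image_eqI[of _ _ "c \<cdot>\<^sub>v v'"]) (auto simp: mult_mat_vec)
qed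

lemma mat_eq_of_mult_unit_vec:
  assumes "A \<in> carrier_mat n n" "B \<in> carrier_mat n n"
    and "\<And>j. j < n \<Longrightarrow> A *\<^sub>v unit_vec n j = B *\<^sub>v unit_vec n j"
  shows "A = (B :: 'a :: comm_ring_1 mat)"
proof (rule eq_matI)
  fix i j assume "i < dim_row B" "j < dim_col B"
  hence ij: "i < n" "j < n" using assms(2) by auto
  have "A $$ (i, j) = (A *\<^sub>v unit_vec n j) $ i" using assms(1) ij by simp
  also have "\<dots> = (B *\<^sub>v unit_vec n j) $ i" using assms(3) ij by simp
  also have "\<dots> = B $$ (i, j)" using assms(2) ij by simp
  finally show "A $$ (i, j) = B $$ (i, j)" .
qed (use assms in auto)

lemma irr_rep_commutant_scalar:
  assumes irr: "irr_rep G N n \<rho>" and Z: "Z \<in> carrier_mat n n"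
    and comm: "\<forall>x\<in>N. Z * \<rho> x = \<rho> x * Z"
  obtains c where "Z = c \<cdot>\<^sub>m 1\<^sub>m n"
proof -
  have n: "n > 0" and \<rho>: "\<And>x. x \<in> N \<Longrightarrow> \<rho> x \<in> carrier_mat n n"
    using irr unfolding irr_rep_def is_rep_def by auto
  obtain c v where v: "v \<in> carrier_vec n" "v \<noteq> 0\<^sub>v n" "Z *\<^sub>v v = c \<cdot>\<^sub>v v"
    using spectrum_non_empty[OF Z n] Z
    unfolding spectrum_def eigenvalue_def eigenvector_def by auto
  define E where "E = {w \<in> carrier_vec n. Z *\<^sub>v w = c \<cdot>\<^sub>v w}"
  have "is_cvsubspace n E" unfolding is_cvsubspace_def E_def using Z
    by (auto simp: mult_add_distrib_mat_vec smult_add_distrib_vec mult_mat_vec smult_smult_assoc mult.commute)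
  moreover have "\<rho> x *\<^sub>v w \<in> E" if x: "x \<in> N" and w: "w \<in> E" for x w
  proof -
    have wc: "w \<in> carrier_vec n" using w unfolding E_def by simp
    have "Z *\<^sub>v (\<rho> x *\<^sub>v w) = (Z * \<rho> x) *\<^sub>v w" using Z \<rho>[OF x] wc by simp
    also have "\<dots> = (\<rho> x * Z) *\<^sub>v w" using comm x by simp
    also have "\<dots> = \<rho> x *\<^sub>v (Z *\<^sub>v w)" using Z \<rho>[OF x] wc by simp
    also have "\<dots> = c \<cdot>\<^sub>v (\<rho> x *\<^sub>v w)" using Z \<rho>[OF x] w unfolding E_def by (auto simp: mult_mat_vec)
    finally show ?thesis using w \<rho>[OF x] unfolding E_def by auto
  qed
  ultimately have "E = {0\<^sub>v n} \<or> E = carrier_vec n" using irr unfolding irr_rep_def by blast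
  moreover have "v \<in> E" using v unfolding E_def by auto
  ultimately have "E = carrier_vec n" using v by auto
  hence "unit_vec n j \<in> E" for j by simp
  hence eig: "Z *\<^sub>v unit_vec n j = c \<cdot>\<^sub>v unit_vec n j" for j unfolding E_def by simp
  have "Z = c \<cdot>\<^sub>m 1\<^sub>m n"
  proof (rule eq_matI)
    fix i j assume "i < dim_row (c \<cdot>\<^sub>m 1\<^sub>m n)" "j < dim_col (c \<cdot>\<^sub>m 1\<^sub>m n)"
    hence ij: "i < n" "j < n" by auto
    have "Z $$ (i, j) = (Z *\<^sub>v unit_vec n j) $ i" using Z ij by simp
    also have "\<dots> = (c \<cdot>\<^sub>v unit_vec n j) $ i" using eig ij by simp
    finally show "Z $$ (i, j) = (c \<cdot>\<^sub>m 1\<^sub>m n) $$ (i, j)" using ij by simp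
  qed (use Z in auto)
  with that show thesis .
qed

lemma intertwiner_image_invariant:
  assumes T: "T \<in> carrier_mat n n" and int: "\<forall>x\<in>N. T * \<pi> x = \<rho> x * T"
    and \<rho>: "\<forall>x\<in>N. \<rho> x \<in> carrier_mat n n" and \<pi>: "\<forall>x\<in>N. \<pi> x \<in> carrier_mat n n"
    and W: "W \<subseteq> carrier_vec n" "\<forall>x\<in>N. \<forall>w\<in>W. \<pi> x *\<^sub>v w \<in> W"
  shows "\<forall>x\<in>N. \<forall>u\<in>(\<lambda>w. T *\<^sub>v w) ` W. \<rho> x *\<^sub>v u \<in> (\<lambda>w. T *\<^sub>v w) ` W"
proof (intro ballI)
  fix x u assume x: "x \<in> N" and "u \<in> (\<lambda>w. T *\<^sub>v w) ` W"
  then obtain w where w: "w \<in> W" "u = T *\<^sub>v w" by auto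
  with W have wc: "w \<in> carrier_vec n" by auto
  have "\<rho> x *\<^sub>v u = (\<rho> x * T) *\<^sub>v w" using w wc T bspec[OF \<rho> x] by simp
  also have "\<dots> = (T * \<pi> x) *\<^sub>v w" using int x by simp
  also have "\<dots> = T *\<^sub>v (\<pi> x *\<^sub>v w)" using wc T bspec[OF \<pi> x] by simp
  finally show "\<rho> x *\<^sub>v u \<in> (\<lambda>w. T *\<^sub>v w) ` W" using W w x by auto
qed

lemma irr_rep_intertwiner_invertible:
  assumes irr: "irr_rep G N n \<rho>" and \<pi>: "\<forall>x\<in>N. \<pi> x \<in> carrier_mat n n"
    and T: "T \<in> carrier_mat n n" and nz: "T \<noteq> 0\<^sub>m n n"
    and int: "\<forall>x\<in>N. T * \<pi> x = \<rho> x * T"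
  obtains Ti where "mat_inverse_pair n T Ti"
proof -
  have \<rho>: "\<forall>x\<in>N. \<rho> x \<in> carrier_mat n n" using irr unfolding irr_rep_def is_rep_def by auto
  define W where "W = (\<lambda>v. T *\<^sub>v v) ` carrier_vec n"
  have "is_cvsubspace n W" unfolding W_def by (rule is_cvsubspace_image[OF T is_cvsubspace_carrier_vec])
  moreover have "\<forall>x\<in>N. \<forall>w\<in>carrier_vec n. \<pi> x *\<^sub>v w \<in> carrier_vec n" using \<pi> by auto
  then have "\<forall>x\<in>N. \<forall>w\<in>W. \<rho> x *\<^sub>v w \<in> W"
    unfolding W_def using intertwiner_image_invariant[OF T int \<rho> \<pi> subset_refl] by blast
  ultimately have "W = {0\<^sub>v n} \<or> W = carrier_vec n" using irr unfolding irr_rep_def by blast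
  moreover have "W \<noteq> {0\<^sub>v n}"
  proof
    assume W0: "W = {0\<^sub>v n}"
    have "T *\<^sub>v unit_vec n j \<in> W" for j unfolding W_def by simp
    hence "T *\<^sub>v unit_vec n j = 0\<^sub>m n n *\<^sub>v unit_vec n j" for j using W0 by auto
    hence "T = 0\<^sub>m n n" using T by (intro mat_eq_of_mult_unit_vec) auto
    with nz show False ..
  qed
  ultimately have "W = carrier_vec n" by simp
  hence "\<forall>j. \<exists>v. v \<in> carrier_vec n \<and> T *\<^sub>v v = unit_vec n j"
    unfolding W_def by (metis image_iff unit_vec_carrier)
  from choice[OF this] obtain col where col: "\<And>j. col j \<in> carrier_vec n \<and> T *\<^sub>v col j = unit_vec n j"
    by blast
  define Ti where "Ti = mat n n (\<lambda>(i, j). col j $ i)"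
  have Ti: "Ti \<in> carrier_mat n n" unfolding Ti_def by simp
  have "T * Ti = 1\<^sub>m n"
  proof (rule mat_eq_of_mult_unit_vec)
    fix j assume j: "j < n"
    have "Ti *\<^sub>v unit_vec n j = col j" using j col[of j] unfolding Ti_def by (intro eq_vecI) auto
    thus "T * Ti *\<^sub>v unit_vec n j = 1\<^sub>m n *\<^sub>v unit_vec n j" using T Ti col[of j] by simp
  qed (use T Ti in auto)
  with mat_mult_left_right_inverse[OF T Ti] T Ti that show thesis
    unfolding mat_inverse_pair_def by auto
qed

lemma irr_rep_similar:
  assumes irr: "irr_rep G N n \<rho>" and \<pi>: "is_rep G N n \<pi>" and T: "mat_inverse_pair n T Ti"
    and int: "\<forall>x\<in>N. T * \<pi> x = \<rho> x * T"
  shows "irr_rep G N n \<pi>"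
  unfolding irr_rep_def
proof (intro conjI allI impI)
  show "n > 0" using irr unfolding irr_rep_def by simp
  show "is_rep G N n \<pi>" by fact
  have Tc: "T \<in> carrier_mat n n" "Ti \<in> carrier_mat n n" "Ti * T = 1\<^sub>m n"
    using T unfolding mat_inverse_pair_def by auto
  have T_inv_cancel: "Ti *\<^sub>v (T *\<^sub>v v) = v" if "v \<in> carrier_vec n" for v
    using that Tc by (simp add: assoc_mult_mat_vec[symmetric])
  fix W assume W: "is_cvsubspace n W \<and> (\<forall>x\<in>N. \<forall>w\<in>W. \<pi> x *\<^sub>v w \<in> W)"
  have Wc: "W \<subseteq> carrier_vec n" "0\<^sub>v n \<in> W" using W unfolding is_cvsubspace_def by auto
  have "\<forall>x\<in>N. \<rho> x \<in> carrier_mat n n" "\<forall>x\<in>N. \<pi> x \<in> carrier_mat n n"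
    using irr \<pi> unfolding irr_rep_def is_rep_def by auto
  then have "is_cvsubspace n ((\<lambda>w. T *\<^sub>v w) ` W) \<and> (\<forall>x\<in>N. \<forall>u\<in>(\<lambda>w. T *\<^sub>v w) ` W. \<rho> x *\<^sub>v u \<in> (\<lambda>w. T *\<^sub>v w) ` W)"
    using is_cvsubspace_image[OF Tc(1)] intertwiner_image_invariant[OF Tc(1) int] W Wc by blast
  then have "(\<lambda>w. T *\<^sub>v w) ` W = {0\<^sub>v n} \<or> (\<lambda>w. T *\<^sub>v w) ` W = carrier_vec n"
    using irr unfolding irr_rep_def by blast
  then show "W = {0\<^sub>v n} \<or> W = carrier_vec n"
  proof
    assume W'0: "(\<lambda>w. T *\<^sub>v w) ` W = {0\<^sub>v n}"
    have "w = 0\<^sub>v n" if w: "w \<in> W" for w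
    proof -
      have "T *\<^sub>v w = 0\<^sub>v n" using W'0 w by blast
      hence "w = Ti *\<^sub>v 0\<^sub>v n" using T_inv_cancel[of w] w Wc by auto
      thus ?thesis using Tc by auto
    qed
    thus ?thesis using Wc by blast
  next
    assume full: "(\<lambda>w. T *\<^sub>v w) ` W = carrier_vec n"
    have "v \<in> W" if v: "v \<in> carrier_vec n" for v
    proof -
      obtain w where "w \<in> W" "T *\<^sub>v v = T *\<^sub>v w" using full v Tc by force
      thus ?thesis using T_inv_cancel[of v] T_inv_cancel[of w] v Wc by auto
    qed
    thus ?thesis using Wc by blast
  qed
qed

lemma (in group) subgroup_bij_betw_mult_left:
  assumes "subgroup N G" "y \<in> N"
  shows "bij_betw (\<lambda>x. y \<otimes> x) N N"
proof -
  interpret N: group "G\<lparr>carrier := N\<rparr>" using subgroup.subgroup_is_group assms(1) is_group by blast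
  show ?thesis using N.inj_on_cmult N.surj_const_mult assms(2) by (simp add: bij_betw_def)
qed

(* The sum over x in N of \<rho>(x) E \<pi>(x\<inverse>), where E is the (j,k) matrix unit *)
definition schur_intertwiner :: "('g, 'b) monoid_scheme \<Rightarrow> 'g set \<Rightarrow> ('g \<Rightarrow> complex mat) \<Rightarrow> ('g \<Rightarrow> complex mat)
   \<Rightarrow> nat \<Rightarrow> nat \<Rightarrow> nat \<Rightarrow> nat \<Rightarrow> complex mat" where
  "schur_intertwiner G N \<rho> \<pi> n m j k = mat n m (\<lambda>(i, l). \<Sum>x\<in>N. \<rho> x $$ (i, j) * \<pi> (inv\<^bsub>G\<^esub> x) $$ (k, l))"

lemma schur_intertwiner_dim [simp]:
  "dim_row (schur_intertwiner G N \<rho> \<pi> n m j k) = n" "dim_col (schur_intertwiner G N \<rho> \<pi> n m j k) = m"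
  unfolding schur_intertwiner_def by simp_all

lemma schur_intertwiner_carrier: "schur_intertwiner G N \<rho> \<pi> n m j k \<in> carrier_mat n m"
  by (simp add: carrier_matI)

context group
begin

lemma index_mult_schur_intertwiner:
  assumes \<rho>: "is_rep G N n \<rho>" and y: "y \<in> N" and i: "i < n" and j: "j < n" and l: "l < m"
  shows "(\<rho> y * schur_intertwiner G N \<rho> \<pi> n m j k) $$ (i, l)
       = (\<Sum>x\<in>N. \<rho> (y \<otimes> x) $$ (i, j) * \<pi> (inv x) $$ (k, l))"
proof -
  have \<rho>c: "\<And>x. x \<in> N \<Longrightarrow> \<rho> x \<in> carrier_mat n n"
    and \<rho>m: "\<And>x. x \<in> N \<Longrightarrow> \<rho> (y \<otimes> x) = \<rho> y * \<rho> x"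
    using \<rho> y unfolding is_rep_def by auto
  have "(\<rho> y * schur_intertwiner G N \<rho> \<pi> n m j k) $$ (i, l)
      = (\<Sum>x\<in>N. (\<Sum>s<n. \<rho> y $$ (i, s) * \<rho> x $$ (s, j)) * \<pi> (inv x) $$ (k, l))"
    using i l \<rho>c[OF y] unfolding schur_intertwiner_def
    by (simp add: scalar_prod_def atLeast0LessThan sum_distrib_left sum_distrib_right mult.assoc sum.swap[of _ N])
  also have "\<dots> = (\<Sum>x\<in>N. \<rho> (y \<otimes> x) $$ (i, j) * \<pi> (inv x) $$ (k, l))"
  proof (intro sum.cong refl)
    fix x assume x: "x \<in> N"
    show "(\<Sum>s<n. \<rho> y $$ (i, s) * \<rho> x $$ (s, j)) * \<pi> (inv x) $$ (k, l)
        = \<rho> (y \<otimes> x) $$ (i, j) * \<pi> (inv x) $$ (k, l)"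
      using \<rho>m[OF x] \<rho>c[OF y] \<rho>c[OF x] i j by (simp add: scalar_prod_def atLeast0LessThan)
  qed
  finally show ?thesis .
qed

lemma index_schur_intertwiner_mult:
  assumes N: "subgroup N G" and \<pi>: "is_rep G N m \<pi>" and y: "y \<in> N" and i: "i < n" and k: "k < m" and l: "l < m"
  shows "(schur_intertwiner G N \<rho> \<pi> n m j k * \<pi> y) $$ (i, l)
       = (\<Sum>x\<in>N. \<rho> x $$ (i, j) * \<pi> (inv x \<otimes> y) $$ (k, l))"
proof -
  have \<pi>c: "\<And>x. x \<in> N \<Longrightarrow> \<pi> x \<in> carrier_mat m m"
    and \<pi>m: "\<And>x. x \<in> N \<Longrightarrow> \<pi> (inv x \<otimes> y) = \<pi> (inv x) * \<pi> y"
    using \<pi> y subgroup.m_inv_closed[OF N] unfolding is_rep_def by auto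
  have "(schur_intertwiner G N \<rho> \<pi> n m j k * \<pi> y) $$ (i, l)
      = (\<Sum>x\<in>N. \<rho> x $$ (i, j) * (\<Sum>s<m. \<pi> (inv x) $$ (k, s) * \<pi> y $$ (s, l)))"
    using i l \<pi>c[OF y] unfolding schur_intertwiner_def
    by (simp add: scalar_prod_def atLeast0LessThan sum_distrib_left sum_distrib_right mult.assoc sum.swap[of _ N])
  also have "\<dots> = (\<Sum>x\<in>N. \<rho> x $$ (i, j) * \<pi> (inv x \<otimes> y) $$ (k, l))"
  proof (intro sum.cong refl)
    fix x assume x: "x \<in> N"
    show "\<rho> x $$ (i, j) * (\<Sum>s<m. \<pi> (inv x) $$ (k, s) * \<pi> y $$ (s, l))
        = \<rho> x $$ (i, j) * \<pi> (inv x \<otimes> y) $$ (k, l)"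
      using \<pi>m[OF x] \<pi>c[OF y] \<pi>c[OF subgroup.m_inv_closed[OF N x]] k l
      by (simp add: scalar_prod_def atLeast0LessThan)
  qed
  finally show ?thesis .
qed

lemma schur_intertwiner_intertwines:
  assumes N: "subgroup N G" and \<rho>: "is_rep G N n \<rho>" and \<pi>: "is_rep G N m \<pi>"
    and y: "y \<in> N" and jk: "j < n" "k < m"
  shows "\<rho> y * schur_intertwiner G N \<rho> \<pi> n m j k = schur_intertwiner G N \<rho> \<pi> n m j k * \<pi> y"
proof (rule eq_matI)
  have \<rho>c: "\<rho> y \<in> carrier_mat n n" and \<pi>c: "\<pi> y \<in> carrier_mat m m"
    using \<rho> \<pi> y unfolding is_rep_def by auto
  then show "dim_row (\<rho> y * schur_intertwiner G N \<rho> \<pi> n m j k) = dim_row (schur_intertwiner G N \<rho> \<pi> n m j k * \<pi> y)"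
    and "dim_col (\<rho> y * schur_intertwiner G N \<rho> \<pi> n m j k) = dim_col (schur_intertwiner G N \<rho> \<pi> n m j k * \<pi> y)"
    by auto
  fix i l assume "i < dim_row (schur_intertwiner G N \<rho> \<pi> n m j k * \<pi> y)"
    "l < dim_col (schur_intertwiner G N \<rho> \<pi> n m j k * \<pi> y)"
  hence il: "i < n" "l < m" using \<pi>c by auto
  have Nc: "\<And>x. x \<in> N \<Longrightarrow> x \<in> carrier G" using subgroup.subset[OF N] by auto
  have "(\<Sum>x\<in>N. \<rho> (y \<otimes> x) $$ (i, j) * \<pi> (inv x) $$ (k, l))
      = (\<Sum>x\<in>N. \<rho> x $$ (i, j) * \<pi> (inv x \<otimes> y) $$ (k, l))"
    using sum.reindex_bij_betw[OF subgroup_bij_betw_mult_left[OF N y],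
        of "\<lambda>x. \<rho> x $$ (i, j) * \<pi> (inv x \<otimes> y) $$ (k, l)"] Nc y
    by (simp add: inv_mult_group m_assoc)
  then show "(\<rho> y * schur_intertwiner G N \<rho> \<pi> n m j k) $$ (i, l) = (schur_intertwiner G N \<rho> \<pi> n m j k * \<pi> y) $$ (i, l)"
    using index_mult_schur_intertwiner[OF \<rho> y il(1) jk(1) il(2)] index_schur_intertwiner_mult[OF N \<pi> y il(1) jk(2) il(2)]
    by simp
qed

lemma sum_mtrace_mult_eq_schur_intertwiner:
  assumes N: "subgroup N G" and \<rho>: "\<And>x. x \<in> N \<Longrightarrow> \<rho> x \<in> carrier_mat n n"
    and \<pi>: "\<And>x. x \<in> N \<Longrightarrow> \<pi> x \<in> carrier_mat m m"
  shows "(\<Sum>x\<in>N. mtrace (\<rho> x) * mtrace (\<pi> (inv x)))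
       = (\<Sum>j<n. \<Sum>k<m. schur_intertwiner G N \<rho> \<pi> n m j k $$ (j, k))"
proof -
  have "(\<Sum>x\<in>N. mtrace (\<rho> x) * mtrace (\<pi> (inv x)))
      = (\<Sum>x\<in>N. \<Sum>j<n. \<Sum>k<m. \<rho> x $$ (j, j) * \<pi> (inv x) $$ (k, k))"
  proof (intro sum.cong refl)
    fix x assume x: "x \<in> N"
    show "mtrace (\<rho> x) * mtrace (\<pi> (inv x)) = (\<Sum>j<n. \<Sum>k<m. \<rho> x $$ (j, j) * \<pi> (inv x) $$ (k, k))"
      using \<rho>[OF x] \<pi>[OF subgroup.m_inv_closed[OF N x]] unfolding mtrace_def by (simp add: sum_product)
  qed
  also have "\<dots> = (\<Sum>j<n. \<Sum>k<m. \<Sum>x\<in>N. \<rho> x $$ (j, j) * \<pi> (inv x) $$ (k, k))"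
    by (subst sum.swap) (simp add: sum.swap[of _ N])
  finally show ?thesis unfolding schur_intertwiner_def by simp
qed

lemma irr_rep_mtrace_orthogonality:
  assumes N: "subgroup N G" and irr: "irr_rep G N n \<rho>"
  shows "(\<Sum>x\<in>N. mtrace (\<rho> x) * mtrace (\<rho> (inv x))) = of_nat (card N)"
proof -
  have n: "n > 0" and \<rho>: "is_rep G N n \<rho>" using irr unfolding irr_rep_def by auto
  have inv: "\<And>x. x \<in> N \<Longrightarrow> inv x \<in> N" using subgroup.m_inv_closed[OF N] by simp
  have \<rho>c: "\<And>x. x \<in> N \<Longrightarrow> \<rho> x \<in> carrier_mat n n" using \<rho> unfolding is_rep_def by auto
  have \<rho>_inv: "\<rho> (inv x) * \<rho> x = 1\<^sub>m n" if x: "x \<in> N" for x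
  proof -
    have "\<rho> (inv x) * \<rho> x = \<rho> (inv x \<otimes> x)" using \<rho> inv[OF x] x unfolding is_rep_def by simp
    also have "\<dots> = 1\<^sub>m n" using \<rho> subgroup.subset[OF N] x unfolding is_rep_def by auto
    finally show ?thesis .
  qed
  let ?A = "schur_intertwiner G N \<rho> \<rho> n n"
  have diag: "of_nat n * ?A j k $$ (j, k) = (if j = k then of_nat (card N) else 0)"
    if jk: "j < n" "k < n" for j k
  proof -
    obtain c where c: "?A j k = c \<cdot>\<^sub>m 1\<^sub>m n"
      using irr_rep_commutant_scalar[OF irr schur_intertwiner_carrier]
        schur_intertwiner_intertwines[OF N \<rho> \<rho> _ jk] by metis
    have "mtrace (?A j k) = (\<Sum>x\<in>N. \<Sum>i<n. \<rho> (inv x) $$ (k, i) * \<rho> x $$ (i, j))"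
      unfolding mtrace_def schur_intertwiner_def by (simp add: sum.swap[of _ N] mult.commute)
    also have "\<dots> = (\<Sum>x\<in>N. (\<rho> (inv x) * \<rho> x) $$ (k, j))"
    proof (intro sum.cong refl)
      fix x assume x: "x \<in> N"
      show "(\<Sum>i<n. \<rho> (inv x) $$ (k, i) * \<rho> x $$ (i, j)) = (\<rho> (inv x) * \<rho> x) $$ (k, j)"
        using \<rho>c[OF x] \<rho>c[OF inv[OF x]] jk by (simp add: scalar_prod_def atLeast0LessThan)
    qed
    also have "\<dots> = (if j = k then of_nat (card N) else 0)"
      using \<rho>_inv jk by simp
    finally show ?thesis using c jk mtrace_smult_one_mat[of c n] by (auto simp: mult.commute)
  qed
  have "of_nat n * (\<Sum>j<n. \<Sum>k<n. ?A j k $$ (j, k)) = of_nat n * of_nat (card N)"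
    using diag by (simp add: sum_distrib_left)
  with n show ?thesis using sum_mtrace_mult_eq_schur_intertwiner[of N \<rho> n \<rho> n, OF N \<rho>c \<rho>c] by simp
qed

lemma is_rep_dim_eq_of_mtrace_eq:
  assumes N: "subgroup N G" and "is_rep G N n \<rho>" "is_rep G N m \<pi>"
    and "\<forall>x\<in>N. mtrace (\<pi> x) = mtrace (\<rho> x)"
  shows "m = n"
  using assms subgroup.one_closed[OF N] unfolding is_rep_def by (metis mtrace_one_mat of_nat_eq_iff)

lemma irr_rep_equiv_of_mtrace_eq:
  assumes N: "subgroup N G" and fin: "finite N" and irr: "irr_rep G N n \<rho>"
    and \<pi>: "is_rep G N n \<pi>" and tr: "\<forall>x\<in>N. mtrace (\<pi> x) = mtrace (\<rho> x)"
  obtains T Ti where "mat_inverse_pair n T Ti" "\<forall>x\<in>N. T * \<pi> x = \<rho> x * T"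
proof -
  have \<rho>: "is_rep G N n \<rho>" using irr unfolding irr_rep_def by auto
  have \<rho>c: "\<And>x. x \<in> N \<Longrightarrow> \<rho> x \<in> carrier_mat n n" and \<pi>c: "\<And>x. x \<in> N \<Longrightarrow> \<pi> x \<in> carrier_mat n n"
    using \<rho> \<pi> unfolding is_rep_def by auto
  let ?A = "schur_intertwiner G N \<rho> \<pi> n n"
  have "(\<Sum>j<n. \<Sum>k<n. ?A j k $$ (j, k)) = (\<Sum>x\<in>N. mtrace (\<rho> x) * mtrace (\<rho> (inv x)))"
    using tr subgroup.m_inv_closed[OF N]
    by (simp add: sum_mtrace_mult_eq_schur_intertwiner[of N \<rho> n \<pi> n, OF N \<rho>c \<pi>c, symmetric])
  also have "\<dots> = of_nat (card N)" by (rule irr_rep_mtrace_orthogonality[OF N irr])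
  also have "\<dots> \<noteq> 0" using fin subgroup.one_closed[OF N] by (auto simp: card_gt_0_iff)
  finally obtain j k where jk: "j < n" "k < n" "?A j k $$ (j, k) \<noteq> 0"
    by (meson sum.not_neutral_contains_not_neutral lessThan_iff)
  have "?A j k \<noteq> 0\<^sub>m n n" using jk by auto
  with irr_rep_intertwiner_invertible[OF irr _ schur_intertwiner_carrier]
    schur_intertwiner_intertwines[OF N \<rho> \<pi> _ jk(1,2)] \<pi>c that
  show thesis by (metis (no_types, lifting))
qed

end

section \<open>The field Qab and its automorphisms\<close>

lemma is_subfield_Inter: "(\<And>K. K \<in> F \<Longrightarrow> is_subfield K) \<Longrightarrow> is_subfield (\<Inter>F)"
  unfolding is_subfield_def by blast

lemma Qab_subfield: "is_subfield Qab"
  unfolding Qab_def by (rule is_subfield_Inter) simp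

lemma root_of_unity_in_Qab: "root_of_unity z \<Longrightarrow> z \<in> Qab"
  unfolding Qab_def by auto

lemma root_of_unity_nonzero: "root_of_unity z \<Longrightarrow> z \<noteq> 0"
  unfolding root_of_unity_def by (auto simp: zero_power)

lemma Qab_0 [simp]: "0 \<in> Qab" and Qab_1 [simp]: "1 \<in> Qab"
  and Qab_add [simp]: "x \<in> Qab \<Longrightarrow> y \<in> Qab \<Longrightarrow> x + y \<in> Qab"
  and Qab_mult [simp]: "x \<in> Qab \<Longrightarrow> y \<in> Qab \<Longrightarrow> x * y \<in> Qab"
  and Qab_inverse [simp]: "x \<in> Qab \<Longrightarrow> inverse x \<in> Qab"
  using Qab_subfield unfolding is_subfield_def by auto

lemma Qab_sum [simp]: "(\<And>i. i \<in> F \<Longrightarrow> f i \<in> Qab) \<Longrightarrow> sum f F \<in> Qab"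
  by (induction F rule: infinite_finite_induct) auto

definition Qab_mat :: "complex mat \<Rightarrow> bool" where
  "Qab_mat A \<longleftrightarrow> (\<forall>i<dim_row A. \<forall>j<dim_col A. A $$ (i, j) \<in> Qab)"

locale Qab_automorphism =
  fixes \<sigma> :: "complex \<Rightarrow> complex"
  assumes Gal: "\<sigma> \<in> Gal_ab"
begin

lemma bij: "bij_betw \<sigma> Qab Qab"
  and add: "x \<in> Qab \<Longrightarrow> y \<in> Qab \<Longrightarrow> \<sigma> (x + y) = \<sigma> x + \<sigma> y"
  and mult: "x \<in> Qab \<Longrightarrow> y \<in> Qab \<Longrightarrow> \<sigma> (x * y) = \<sigma> x * \<sigma> y"
  and outside: "z \<notin> Qab \<Longrightarrow> \<sigma> z = z"
  using Gal unfolding Gal_ab_def by auto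

lemma closed [simp]: "x \<in> Qab \<Longrightarrow> \<sigma> x \<in> Qab"
  using bij bij_betwE by blast

lemma inj: "\<sigma> x = \<sigma> y \<Longrightarrow> x = y"
  using bij closed outside unfolding bij_betw_def inj_on_def by metis

lemma zero [simp]: "\<sigma> 0 = 0"
  using add[of 0 0] by simp

lemma nonzero: "x \<noteq> 0 \<Longrightarrow> \<sigma> x \<noteq> 0"
  using inj[of x 0] by auto

lemma one [simp]: "\<sigma> 1 = 1"
  using mult[of 1 1] nonzero[of 1] by simp

lemma sum: "(\<And>i. i \<in> F \<Longrightarrow> f i \<in> Qab) \<Longrightarrow> \<sigma> (sum f F) = (\<Sum>i\<in>F. \<sigma> (f i))"
  by (induction F rule: infinite_finite_induct) (auto simp: add)

lemma inverse: "x \<in> Qab \<Longrightarrow> \<sigma> (inverse x) = inverse (\<sigma> x)"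
  using mult[of x "inverse x"] by (cases "x = 0") (auto simp: inverse_unique)

lemma map_mat_mult:
  assumes "Qab_mat A" "Qab_mat B" "dim_col A = dim_row B"
  shows "map_mat \<sigma> (A * B) = map_mat \<sigma> A * map_mat \<sigma> B"
proof (rule eq_matI)
  fix i j assume ij: "i < dim_row (map_mat \<sigma> A * map_mat \<sigma> B)" "j < dim_col (map_mat \<sigma> A * map_mat \<sigma> B)"
  have "\<sigma> (\<Sum>k = 0..<dim_row B. A $$ (i, k) * B $$ (k, j)) = (\<Sum>k = 0..<dim_row B. \<sigma> (A $$ (i, k)) * \<sigma> (B $$ (k, j)))"
    using assms ij unfolding Qab_mat_def by (subst sum) (auto intro!: sum.cong mult)
  then show "map_mat \<sigma> (A * B) $$ (i, j) = (map_mat \<sigma> A * map_mat \<sigma> B) $$ (i, j)"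
    using ij assms by (simp add: scalar_prod_def)
qed auto

lemma map_mat_smult: "c \<in> Qab \<Longrightarrow> Qab_mat A \<Longrightarrow> map_mat \<sigma> (c \<cdot>\<^sub>m A) = \<sigma> c \<cdot>\<^sub>m map_mat \<sigma> A"
  unfolding Qab_mat_def by (intro eq_matI) (auto simp: mult)

lemma map_mat_one [simp]: "map_mat \<sigma> (1\<^sub>m n) = 1\<^sub>m n"
  by (intro eq_matI) auto

lemma mtrace_map_mat:
  assumes "Qab_mat A" "A \<in> carrier_mat n n"
  shows "mtrace (map_mat \<sigma> A) = \<sigma> (mtrace A)"
  using assms unfolding mtrace_def Qab_mat_def by (subst sum) auto

end

lemma Hgal_subset_Gal_ab: "Hgal p \<subseteq> Gal_ab"
  unfolding Hgal_def by auto

lemma id_in_Hgal: "id \<in> Hgal p"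
proof -
  have "id \<in> Gal_ab" unfolding Gal_ab_def by (auto simp: bij_betw_def)
  then show ?thesis unfolding Hgal_def by (auto intro!: exI[of _ 0])
qed

lemma stab_pair_memD:
  "(x, \<sigma>) \<in> stab_pair p G H N \<theta> \<Longrightarrow> x \<in> H \<and> \<sigma> \<in> Gal_ab \<and> fixes_char G N \<theta> x \<sigma>"
  using Hgal_subset_Gal_ab unfolding stab_pair_def by auto

lemma stab_eq_of_stab_pair_eq:
  assumes "stab_pair p G H N \<theta> = stab_pair p G H M \<phi>"
  shows "stab G H N \<theta> = stab G H M \<phi>"
proof -
  have "x \<in> stab G H N \<theta> \<longleftrightarrow> (x, id) \<in> stab_pair p G H N \<theta>"
    and "x \<in> stab G H M \<phi> \<longleftrightarrow> (x, id) \<in> stab_pair p G H M \<phi>" for x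
    unfolding stab_def stab_pair_def using id_in_Hgal by auto
  with assms show ?thesis by blast
qed

lemma (in group) inv_mult_cancel_left [simp]:
  "x \<in> carrier G \<Longrightarrow> y \<in> carrier G \<Longrightarrow> x \<otimes> (inv x \<otimes> y) = y"
  "x \<in> carrier G \<Longrightarrow> y \<in> carrier G \<Longrightarrow> inv x \<otimes> (x \<otimes> y) = y"
  by (simp_all flip: m_assoc)

lemma (in group) fixes_char_iff:
  "fixes_char G N \<theta> x \<sigma> \<longleftrightarrow> (\<forall>n\<in>N. \<sigma> (\<theta> (x \<otimes> n \<otimes> inv x)) = \<theta> n)"
  unfolding fixes_char_def char_act_def by simp

lemma (in group) mem_stab_iff:
  "x \<in> stab G H N \<theta> \<longleftrightarrow> x \<in> H \<and> (\<forall>n\<in>N. \<theta> (x \<otimes> n \<otimes> inv x) = \<theta> n)"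
  unfolding stab_def fixes_char_iff by simp

locale subgroup_normalizing = group +
  fixes H N
  assumes subgroup_H: "subgroup H G" and N_subset: "N \<subseteq> carrier G"
    and conj_closed: "\<And>h n. h \<in> H \<Longrightarrow> n \<in> N \<Longrightarrow> h \<otimes> n \<otimes> inv h \<in> N"
begin

lemma H_carrier: "h \<in> H \<Longrightarrow> h \<in> carrier G"
  using subgroup.subset[OF subgroup_H] by auto

lemma N_carrier: "n \<in> N \<Longrightarrow> n \<in> carrier G"
  using N_subset by auto

lemma fixes_char_mult_left:
  assumes k: "k \<in> stab G H N \<theta>" and x: "x \<in> H" and fx: "fixes_char G N \<theta> x \<sigma>"
  shows "fixes_char G N \<theta> (k \<otimes> x) \<sigma>"
  unfolding fixes_char_iff
proof
  fix n assume n: "n \<in> N"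
  have kH: "k \<in> H" using k unfolding stab_def by auto
  have "k \<otimes> x \<otimes> n \<otimes> inv (k \<otimes> x) = k \<otimes> (x \<otimes> n \<otimes> inv x) \<otimes> inv k"
    using H_carrier[OF kH] H_carrier[OF x] N_carrier[OF n] by (simp add: m_assoc inv_mult_group)
  thus "\<sigma> (\<theta> (k \<otimes> x \<otimes> n \<otimes> inv (k \<otimes> x))) = \<theta> n"
    using k fx conj_closed[OF x n] n unfolding mem_stab_iff fixes_char_iff by simp
qed

lemma stab_subgroup: "subgroup (stab G H N \<theta>) G"
proof (rule subgroupI)
  show "stab G H N \<theta> \<subseteq> carrier G" using H_carrier unfolding stab_def by auto
  have "\<one> \<in> stab G H N \<theta>"
    using subgroup.one_closed[OF subgroup_H] N_carrier unfolding mem_stab_iff by simp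
  thus "stab G H N \<theta> \<noteq> {}" by blast
next
  fix a b assume "a \<in> stab G H N \<theta>" "b \<in> stab G H N \<theta>"
  then show "a \<otimes> b \<in> stab G H N \<theta>"
    using fixes_char_mult_left[of a \<theta> b id] subgroup.m_closed[OF subgroup_H] unfolding stab_def by auto
next
  fix a assume a: "a \<in> stab G H N \<theta>"
  hence aH: "a \<in> H" and inv_aH: "inv a \<in> H" using subgroup.m_inv_closed[OF subgroup_H] unfolding stab_def by auto
  show "inv a \<in> stab G H N \<theta>" unfolding mem_stab_iff
  proof (intro conjI ballI inv_aH)
    fix n assume n: "n \<in> N"
    have "a \<otimes> (inv a \<otimes> n \<otimes> inv (inv a)) \<otimes> inv a = n"
      using H_carrier[OF aH] N_carrier[OF n] by (simp add: m_assoc)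
    thus "\<theta> (inv a \<otimes> n \<otimes> inv (inv a)) = \<theta> n"
      using a conj_closed[OF inv_aH n] unfolding mem_stab_iff by metis
  qed
qed

lemma conj_mem_stab:
  assumes x: "x \<in> H" and \<sigma>: "\<sigma> \<in> Gal_ab" and fx: "fixes_char G N \<theta> x \<sigma>"
    and h: "h \<in> stab G H N \<theta>"
  shows "x \<otimes> h \<otimes> inv x \<in> stab G H N \<theta>"
  unfolding mem_stab_iff
proof (intro conjI ballI)
  interpret \<sigma>: Qab_automorphism \<sigma> by (fact Qab_automorphism.intro[OF \<sigma>])
  have hH: "h \<in> H" using h unfolding stab_def by auto
  have inv_xH: "inv x \<in> H" using subgroup.m_inv_closed[OF subgroup_H x] .
  show "x \<otimes> h \<otimes> inv x \<in> H" using subgroup.m_closed[OF subgroup_H] x hH inv_xH by blast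
  fix m assume m: "m \<in> N"
  define n where "n = inv x \<otimes> m \<otimes> x"
  have n: "n \<in> N" and w: "h \<otimes> n \<otimes> inv h \<in> N"
    using conj_closed[OF inv_xH m] conj_closed[OF hH] H_carrier[OF x] unfolding n_def by auto
  have "x \<otimes> h \<otimes> inv x \<otimes> m \<otimes> inv (x \<otimes> h \<otimes> inv x) = x \<otimes> (h \<otimes> n \<otimes> inv h) \<otimes> inv x"
    and "x \<otimes> n \<otimes> inv x = m"
    unfolding n_def using H_carrier[OF x] H_carrier[OF hH] N_carrier[OF m] by (simp_all add: m_assoc inv_mult_group)
  moreover have "\<sigma> (\<theta> (x \<otimes> (h \<otimes> n \<otimes> inv h) \<otimes> inv x)) = \<sigma> (\<theta> (x \<otimes> n \<otimes> inv x))"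
    using fx h n w unfolding fixes_char_iff mem_stab_iff by simp
  ultimately show "\<theta> (x \<otimes> h \<otimes> inv x \<otimes> m \<otimes> inv (x \<otimes> h \<otimes> inv x)) = \<theta> m"
    using \<sigma>.inj by simp
qed

end

section \<open>Coset transversals\<close>

lemma (in group) equiv_left_coset_rel:
  assumes K: "subgroup K G" and A: "\<And>a. a \<in> A \<Longrightarrow> fst a \<in> carrier G"
  shows "equiv A {(a, b). a \<in> A \<and> b \<in> A \<and> (\<exists>h\<in>K. a = (h \<otimes> fst b, snd b))}"
    (is "equiv A ?r")
proof (rule equivI)
  have Kc: "\<And>h. h \<in> K \<Longrightarrow> h \<in> carrier G" using subgroup.subset[OF K] by auto
  show "?r \<subseteq> A \<times> A" by auto
  show "refl_on A ?r" unfolding refl_on_def using subgroup.one_closed[OF K] A by force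
  show "sym ?r"
  proof (rule symI)
    fix a b assume "(a, b) \<in> ?r"
    then obtain h where ab: "a \<in> A" "b \<in> A" "h \<in> K" "a = (h \<otimes> fst b, snd b)" by auto
    then have "b = (inv h \<otimes> fst a, snd a)" using Kc A[OF ab(2)] by (simp add: prod_eq_iff)
    then show "(b, a) \<in> ?r" using ab subgroup.m_inv_closed[OF K] by auto
  qed
  show "trans ?r"
  proof (rule transI)
    fix a b c assume "(a, b) \<in> ?r" "(b, c) \<in> ?r"
    then obtain h h' where abc: "a \<in> A" "c \<in> A" "h \<in> K" "h' \<in> K"
      "a = (h \<otimes> fst b, snd b)" "b = (h' \<otimes> fst c, snd c)" by auto
    then have "a = ((h \<otimes> h') \<otimes> fst c, snd c)" using Kc A[OF abc(2)] by (simp add: m_assoc)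
    then show "(a, c) \<in> ?r" using abc subgroup.m_closed[OF K] by auto
  qed
qed

lemma (in group) coset_transversal_exists:
  assumes K: "subgroup K G" and A: "\<And>a. a \<in> A \<Longrightarrow> fst a \<in> carrier G"
  obtains T where "coset_transversal G K A T"
proof -
  define r where "r = {(a, b). a \<in> A \<and> b \<in> A \<and> (\<exists>h\<in>K. a = (h \<otimes> fst b, snd b))}"
  have r: "equiv A r" unfolding r_def using equiv_left_coset_rel[OF K A] .
  define rep where "rep a = (SOME t. t \<in> r``{a})" for a
  have rep: "(a, rep a) \<in> r" if "a \<in> A" for a
    using someI[of "\<lambda>t. t \<in> r``{a}", OF equiv_class_self[OF r that]] unfolding rep_def by simp
  have "coset_transversal G K A (rep ` A)" unfolding coset_transversal_def
  proof (intro conjI ballI)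
    show "rep ` A \<subseteq> A" using rep unfolding r_def by auto
    fix a assume a: "a \<in> A"
    show "\<exists>!t. t \<in> rep ` A \<and> (\<exists>h\<in>K. a = (h \<otimes> fst t, snd t))"
    proof (rule ex1I[of _ "rep a"])
      show "rep a \<in> rep ` A \<and> (\<exists>h\<in>K. a = (h \<otimes> fst (rep a), snd (rep a)))"
        using rep[OF a] a unfolding r_def by auto
      fix t assume t: "t \<in> rep ` A \<and> (\<exists>h\<in>K. a = (h \<otimes> fst t, snd t))"
      then obtain b where b: "b \<in> A" "t = rep b" by auto
      have "(a, t) \<in> r" "(b, t) \<in> r" using t a rep[OF b(1)] b unfolding r_def by auto
      hence "r``{a} = r``{b}" using equiv_class_eq_iff[OF r] by metis
      thus "t = rep a" unfolding rep_def b by simp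
    qed
  qed
  with that show thesis .
qed

lemma (in group) ball_iff_ex_coset_transversal:
  assumes K: "subgroup K G" and A: "\<And>a. a \<in> A \<Longrightarrow> fst a \<in> carrier G"
    and invariant: "\<And>a h. a \<in> A \<Longrightarrow> h \<in> K \<Longrightarrow> \<Phi> a \<Longrightarrow> \<Phi> (h \<otimes> fst a, snd a)"
  shows "(\<forall>a\<in>A. \<Phi> a) \<longleftrightarrow> (\<exists>T. coset_transversal G K A T \<and> (\<forall>a\<in>T. \<Phi> a))"
proof -
  have "\<Phi> a" if T: "coset_transversal G K A T" and \<Phi>T: "\<forall>t\<in>T. \<Phi> t" and a: "a \<in> A" for T a
  proof -
    obtain t h where t: "t \<in> T" "h \<in> K" "a = (h \<otimes> fst t, snd t)"
      using T a unfolding coset_transversal_def by blast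
    have "T \<subseteq> A" using T unfolding coset_transversal_def by blast
    then show "\<Phi> a" using invariant[of t h] t \<Phi>T by auto
  qed
  moreover obtain T where "coset_transversal G K A T" using coset_transversal_exists[OF K A] .
  moreover have "T \<subseteq> A" using calculation(2) unfolding coset_transversal_def by blast
  ultimately show ?thesis by blast
qed

section \<open>Projective representations associated with \<theta>\<close>

locale assoc_proj_rep = group +
  fixes C N \<theta> d P \<alpha>
  assumes finite_carrier: "finite (carrier G)"
    and subgroup_C: "subgroup C G" and normal_N: "N \<lhd> G\<lparr>carrier := C\<rparr>"
    and irr_\<theta>: "irr_char G N \<theta>"
    and proj: "proj_rep G (stab G C N \<theta>) d P \<alpha>"
    and assoc: "assoc_proj G (stab G C N \<theta>) N \<theta> d P"
    and P_Qab: "\<forall>x\<in>stab G C N \<theta>. \<forall>i<d. \<forall>j<d. P x $$ (i, j) \<in> Qab"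
    and \<alpha>_root_of_unity: "\<forall>x\<in>stab G C N \<theta>. \<forall>y\<in>stab G C N \<theta>. root_of_unity (\<alpha> x y)"
begin

abbreviation S where "S \<equiv> stab G C N \<theta>"

lemma N_subgroup_C: "subgroup N (G\<lparr>carrier := C\<rparr>)"
  using normal_imp_subgroup[OF normal_N] .

lemma N_subgroup: "subgroup N G"
  using incl_subgroup[OF subgroup_C N_subgroup_C] .

lemma N_subset_C: "N \<subseteq> C"
  using subgroup.subset[OF N_subgroup_C] by simp

sublocale subgroup_normalizing G C N
proof (rule subgroup_normalizing.intro[OF is_group subgroup_normalizing_axioms.intro[OF subgroup_C]])
  show "N \<subseteq> carrier G" using subgroup.subset[OF N_subgroup] .
  show "c \<otimes> n \<otimes> inv c \<in> N" if "c \<in> C" "n \<in> N" for c n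
    using normal.inv_op_closed2[OF normal_N, of c n] m_inv_consistent[OF subgroup_C] that by simp
qed

lemma subgroup_normalizing_subgroup: "subgroup H G \<Longrightarrow> H \<subseteq> C \<Longrightarrow> subgroup_normalizing G H N"
  using conj_closed subgroup.subset N_subset
  by (intro subgroup_normalizing.intro subgroup_normalizing_axioms.intro is_group) auto

lemma S_subgroup: "subgroup S G"
  by (rule stab_subgroup)

lemma S_carrier: "y \<in> S \<Longrightarrow> y \<in> carrier G"
  using subgroup.subset[OF S_subgroup] by auto

lemma S_C: "y \<in> S \<Longrightarrow> y \<in> C"
  unfolding stab_def by simp

lemma S_mult: "y \<in> S \<Longrightarrow> z \<in> S \<Longrightarrow> y \<otimes> z \<in> S"
  and S_inv: "y \<in> S \<Longrightarrow> inv y \<in> S"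
  and S_one: "\<one> \<in> S"
  using subgroup.m_closed[OF S_subgroup] subgroup.m_inv_closed[OF S_subgroup] subgroup.one_closed[OF S_subgroup]
  by auto

lemma N_inv: "n \<in> N \<Longrightarrow> inv n \<in> N"
  using subgroup.m_inv_closed[OF N_subgroup] by simp

lemma finite_N: "finite N"
  using finite_subset[OF N_subset finite_carrier] .

lemma P_carrier: "y \<in> S \<Longrightarrow> P y \<in> carrier_mat d d"
  and P_invertible: "y \<in> S \<Longrightarrow> invertible_mat (P y)"
  and P_mult: "y \<in> S \<Longrightarrow> z \<in> S \<Longrightarrow> P y * P z = \<alpha> y z \<cdot>\<^sub>m P (y \<otimes> z)"
  using proj unfolding proj_rep_def by auto

lemma P_rep: "is_rep G N d P"
  and P_trace: "n \<in> N \<Longrightarrow> mtrace (P n) = \<theta> n"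
  and P_mult_N_left: "n \<in> N \<Longrightarrow> y \<in> S \<Longrightarrow> P (n \<otimes> y) = P n * P y"
  and P_mult_N_right: "n \<in> N \<Longrightarrow> y \<in> S \<Longrightarrow> P (y \<otimes> n) = P y * P n"
  using assoc unfolding assoc_proj_def by auto

lemma P_one: "P \<one> = 1\<^sub>m d"
  using P_rep unfolding is_rep_def by simp

lemma P_Qab_mat: "y \<in> S \<Longrightarrow> Qab_mat (P y)"
  using P_Qab P_carrier unfolding Qab_mat_def by (metis carrier_matD)

lemma \<alpha>_Qab: "y \<in> S \<Longrightarrow> z \<in> S \<Longrightarrow> \<alpha> y z \<in> Qab"
  and \<alpha>_nonzero: "y \<in> S \<Longrightarrow> z \<in> S \<Longrightarrow> \<alpha> y z \<noteq> 0"
  using \<alpha>_root_of_unity root_of_unity_in_Qab root_of_unity_nonzero by auto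

(* instances of degree d, so that simp can discharge their carrier premises *)
lemmas mat_d_simps [simp] = assoc_mult_mat[of _ d d _ d _ d] mult_carrier_mat[of _ d d _ d]
  mult_smult_assoc_mat[of _ d d _ d] mult_smult_distrib[of _ d d _ d] mult_inverse_cancel_left[of _ _ d _ d]
  left_mult_one_mat[of _ d d] right_mult_one_mat[of _ d d]

(* \<theta> is N-invariant, being the character of the representation P of N. *)
lemma N_subset_S: "N \<subseteq> S"
proof
  fix n assume n: "n \<in> N"
  have Pc: "\<And>m. m \<in> N \<Longrightarrow> P m \<in> carrier_mat d d" and Pm: "\<And>m m'. m \<in> N \<Longrightarrow> m' \<in> N \<Longrightarrow> P (m \<otimes> m') = P m * P m'"
    using P_rep unfolding is_rep_def by auto
  have Pn_inv: "P (inv n) * P n = 1\<^sub>m d"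
    using Pm[OF N_inv[OF n] n] N_carrier[OF n] P_one by simp
  show "n \<in> S" unfolding mem_stab_iff
  proof (intro conjI ballI)
    show "n \<in> C" using n N_subset_C by auto
    fix m assume m: "m \<in> N"
    have "mtrace (P (n \<otimes> m \<otimes> inv n)) = mtrace (P n * (P m * P (inv n)))"
      using Pm[OF subgroup.m_closed[OF N_subgroup n m] N_inv[OF n]] Pm[OF n m] Pc n m N_inv by simp
    also have "\<dots> = mtrace (P m * (P (inv n) * P n))"
      using mtrace_mult_comm[of "P n" d "P m * P (inv n)"] Pc n m N_inv by simp
    finally show "\<theta> (n \<otimes> m \<otimes> inv n) = \<theta> m"
      using Pn_inv Pc[OF m] P_trace m conj_closed[OF subsetD[OF N_subset_C n] m] by simp
  qed
qed

lemma P_irr: "irr_rep G N d P"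
proof -
  obtain n \<rho> where \<rho>: "irr_rep G N n \<rho>" and tr: "\<forall>x\<in>N. \<theta> x = mtrace (\<rho> x)"
    using irr_\<theta> unfolding irr_char_def by blast
  have trP: "\<forall>x\<in>N. mtrace (P x) = mtrace (\<rho> x)" using tr P_trace by simp
  have "d = n" using is_rep_dim_eq_of_mtrace_eq[OF N_subgroup _ P_rep trP] \<rho> unfolding irr_rep_def by blast
  then obtain T Ti where "mat_inverse_pair d T Ti" "\<forall>x\<in>N. T * P x = \<rho> x * T"
    using irr_rep_equiv_of_mtrace_eq[OF N_subgroup finite_N \<rho> _ trP] P_rep by metis
  then show ?thesis using irr_rep_similar \<rho> P_rep \<open>d = n\<close> by blast
qed

lemma d_pos: "d > 0"
  using P_irr unfolding irr_rep_def by simp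

lemma P_nonzero: "y \<in> S \<Longrightarrow> P y \<noteq> 0\<^sub>m d d"
  using P_invertible P_carrier invertible_mat_inverse_pair one_mat_neq_zero[OF d_pos]
  unfolding mat_inverse_pair_def by (metis left_mult_zero_mat)

lemma conj_eq_of_conj_eq_on_N:
  assumes L1: "mat_inverse_pair d L1 L1i" and L2: "mat_inverse_pair d L2 L2i"
    and eq: "\<forall>n\<in>N. L1i * P n * L1 = L2i * P n * L2" and A: "A \<in> carrier_mat d d"
  shows "L1i * A * L1 = L2i * A * L2"
proof -
  have L: "L1 \<in> carrier_mat d d" "L1i \<in> carrier_mat d d" "L1 * L1i = 1\<^sub>m d" "L1i * L1 = 1\<^sub>m d"
    "L2 \<in> carrier_mat d d" "L2i \<in> carrier_mat d d" "L2 * L2i = 1\<^sub>m d" "L2i * L2 = 1\<^sub>m d"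
    using L1 L2 unfolding mat_inverse_pair_def by auto
  have Pc: "\<And>n. n \<in> N \<Longrightarrow> P n \<in> carrier_mat d d" using P_rep unfolding is_rep_def by auto
  have "(L2 * L1i) * P n = P n * (L2 * L1i)" if n: "n \<in> N" for n
  proof -
    have "(L2 * L1i) * P n = L2 * ((L1i * P n * L1) * L1i)" using L Pc[OF n] by simp
    also have "\<dots> = L2 * ((L2i * P n * L2) * L1i)" using eq n by simp
    also have "\<dots> = P n * (L2 * L1i)" using L Pc[OF n] by simp
    finally show ?thesis .
  qed
  then obtain c where c: "L2 * L1i = c \<cdot>\<^sub>m 1\<^sub>m d"
    using irr_rep_commutant_scalar[OF P_irr, of "L2 * L1i"] L by auto
  have "L2 = (L2 * L1i) * L1" using L by simp
  also have "\<dots> = c \<cdot>\<^sub>m L1" unfolding c using L by (simp add: smult_one_mat_mult)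
  finally have L2_eq: "L2 = c \<cdot>\<^sub>m L1" .
  moreover have "L1i = c \<cdot>\<^sub>m L2i"
    using arg_cong[OF L2_eq, of "\<lambda>A. L1i * (A * L2i)"] L by simp
  ultimately show ?thesis using L A by simp
qed

lemma intertwiner_eq_smult_P:
  assumes y: "y \<in> S" and A: "A \<in> carrier_mat d d"
    and int: "\<forall>n\<in>N. A * P n = P (y \<otimes> n \<otimes> inv y) * A"
  obtains c where "A = c \<cdot>\<^sub>m P y"
proof -
  obtain B where B: "mat_inverse_pair d (P y) B" using invertible_mat_inverse_pair P_carrier P_invertible y by blast
  hence Bc: "B \<in> carrier_mat d d" "P y * B = 1\<^sub>m d" "B * P y = 1\<^sub>m d" unfolding mat_inverse_pair_def by auto
  have "(A * B) * P m = P m * (A * B)" if m: "m \<in> N" for m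
  proof -
    define n where "n = inv y \<otimes> m \<otimes> y"
    have n: "n \<in> N" and ymy: "y \<otimes> n \<otimes> inv y = m" and yn: "y \<otimes> n = m \<otimes> y"
      using conj_closed[OF S_C[OF S_inv[OF y]] m] S_carrier[OF y] N_carrier[OF m]
      unfolding n_def by (simp_all add: m_assoc)
    have Pc: "P n \<in> carrier_mat d d" "P m \<in> carrier_mat d d" using P_rep n m unfolding is_rep_def by auto
    have "P y * P n = P m * P y" using P_mult_N_right[OF n y] P_mult_N_left[OF m y] yn by simp
    hence "B * (P y * P n * B) = B * (P m * P y * B)" by simp
    hence "B * P m = P n * B" using Bc Pc P_carrier[OF y] by simp
    hence "(A * B) * P m = (A * P n) * B" using A Bc Pc by simp
    also have "\<dots> = P m * (A * B)" using int n ymy A Bc Pc by simp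
    finally show ?thesis .
  qed
  then obtain c where c: "A * B = c \<cdot>\<^sub>m 1\<^sub>m d"
    using irr_rep_commutant_scalar[OF P_irr, of "A * B"] A Bc by auto
  have "A = (A * B) * P y" using A Bc P_carrier[OF y] by simp
  also have "\<dots> = c \<cdot>\<^sub>m P y" unfolding c using P_carrier[OF y] by (simp add: smult_one_mat_mult)
  finally have "A = c \<cdot>\<^sub>m P y" .
  with that show thesis .
qed

lemma map_P_mult:
  assumes \<sigma>: "\<sigma> \<in> Gal_ab" and y: "y \<in> S" and z: "z \<in> S"
  shows "map_mat \<sigma> (P y) * map_mat \<sigma> (P z) = \<sigma> (\<alpha> y z) \<cdot>\<^sub>m map_mat \<sigma> (P (y \<otimes> z))"
proof -
  interpret \<sigma>: Qab_automorphism \<sigma> by (fact Qab_automorphism.intro[OF \<sigma>])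
  show ?thesis
    using \<sigma>.map_mat_mult[OF P_Qab_mat[OF y] P_Qab_mat[OF z]] \<sigma>.map_mat_smult[OF \<alpha>_Qab[OF y z] P_Qab_mat[OF S_mult[OF y z]]]
      P_mult[OF y z] P_carrier[OF y] P_carrier[OF z] by simp
qed

lemma \<alpha>_N:
  assumes k: "k \<in> S" and m: "m \<in> N"
  shows "\<alpha> k m = 1" and "\<alpha> (k \<otimes> m) (inv k) = \<alpha> k (inv k)"
proof -
  have mS: "m \<in> S" using m N_subset_S by auto
  have km: "k \<otimes> m \<in> S" and ik: "inv k \<in> S" using S_mult[OF k mS] S_inv[OF k] .
  have "1 \<cdot>\<^sub>m P (k \<otimes> m) = \<alpha> k m \<cdot>\<^sub>m P (k \<otimes> m)" using P_mult[OF k mS] P_mult_N_right[OF m k] by simp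
  thus "\<alpha> k m = 1" using smult_mat_cancel[OF P_carrier[OF km] P_nonzero[OF km]] by metis
  define w where "w = k \<otimes> m \<otimes> inv k"
  have w: "w \<in> N" and wS: "w \<in> S" unfolding w_def using conj_closed[OF S_C[OF k] m] N_subset_S by auto
  have Pw: "P w \<in> carrier_mat d d" using P_carrier[OF wS] .
  have "k \<otimes> m = w \<otimes> k" unfolding w_def using S_carrier[OF k] N_carrier[OF m] by (simp add: m_assoc)
  hence "\<alpha> (k \<otimes> m) (inv k) \<cdot>\<^sub>m P w = P w * (P k * P (inv k))"
    using P_mult[OF km ik] P_mult_N_left[OF w k] P_carrier[OF k] P_carrier[OF ik] Pw
    unfolding w_def by (simp add: m_assoc S_carrier[OF k])
  also have "\<dots> = \<alpha> k (inv k) \<cdot>\<^sub>m P w"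
    using P_mult[OF k ik] S_carrier[OF k] P_one Pw by (simp add: mult_smult_one_mat)
  finally show "\<alpha> (k \<otimes> m) (inv k) = \<alpha> k (inv k)" using smult_mat_cancel[OF Pw P_nonzero[OF wS]] by blast
qed

lemma map_P_conj:
  assumes \<sigma>: "\<sigma> \<in> Gal_ab" and k: "k \<in> S" and z: "z \<in> S"
  shows "map_mat \<sigma> (P k) * map_mat \<sigma> (P z) * map_mat \<sigma> (P (inv k))
       = \<sigma> (\<alpha> k z * \<alpha> (k \<otimes> z) (inv k)) \<cdot>\<^sub>m map_mat \<sigma> (P (k \<otimes> z \<otimes> inv k))"
proof -
  interpret \<sigma>: Qab_automorphism \<sigma> by (fact Qab_automorphism.intro[OF \<sigma>])
  have kz: "k \<otimes> z \<in> S" and ik: "inv k \<in> S" using S_mult[OF k z] S_inv[OF k] .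
  show ?thesis
    using map_P_mult[OF \<sigma> k z] map_P_mult[OF \<sigma> kz ik] P_carrier[OF kz] P_carrier[OF ik]
      \<sigma>.mult[OF \<alpha>_Qab[OF k z] \<alpha>_Qab[OF kz ik]] by (simp add: mult.commute)
qed

lemma mu_cond_N: "mu_cond G S N d P a \<mu> \<Longrightarrow> n \<in> N \<Longrightarrow> \<mu> n = 1"
  unfolding mu_cond_def using S_one N_carrier by (metis r_one)

end

section \<open>The scalar functions \<mu>\<close>

definition twisted_proj :: "('g, 'b) monoid_scheme \<Rightarrow> ('g \<Rightarrow> complex mat) \<Rightarrow> 'g \<times> (complex \<Rightarrow> complex)
    \<Rightarrow> 'g \<Rightarrow> complex mat" where
  "twisted_proj G P a y = map_mat (snd a) (P (fst a \<otimes>\<^bsub>G\<^esub> y \<otimes>\<^bsub>G\<^esub> inv\<^bsub>G\<^esub> (fst a)))"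

lemma mu_cond_iff:
  "mu_cond G S N d P a \<mu> \<longleftrightarrow> \<mu> \<in> extensional S \<and> (\<forall>y\<in>S. \<mu> y \<noteq> 0) \<and> \<mu> \<one>\<^bsub>G\<^esub> = 1
     \<and> (\<forall>y\<in>S. \<forall>n\<in>N. \<mu> (n \<otimes>\<^bsub>G\<^esub> y) = \<mu> y)
     \<and> (\<exists>L Li. mat_inverse_pair d L Li \<and> (\<forall>y\<in>S. twisted_proj G P a y = \<mu> y \<cdot>\<^sub>m (Li * P y * L)))"
  unfolding mu_cond_def mat_inverse_pair_def twisted_proj_def by blast

lemma (in group) twisted_proj_mult_left:
  "k \<in> carrier G \<Longrightarrow> x \<in> carrier G \<Longrightarrow> y \<in> carrier G \<Longrightarrow>
   twisted_proj G P (k \<otimes> x, \<sigma>) y = twisted_proj G P (k, \<sigma>) (x \<otimes> y \<otimes> inv x)"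
  unfolding twisted_proj_def by (simp add: m_assoc inv_mult_group)

(* P (k z k\<inverse>) = conj_cocycle G \<alpha> k z \<cdot> P k P z (P k)\<inverse>, since P k P (k\<inverse>) = \<alpha> k k\<inverse> \<cdot> 1 *)
definition conj_cocycle :: "('g, 'b) monoid_scheme \<Rightarrow> ('g \<Rightarrow> 'g \<Rightarrow> complex) \<Rightarrow> 'g \<Rightarrow> 'g \<Rightarrow> complex" where
  "conj_cocycle G \<alpha> k z = \<alpha> k (inv\<^bsub>G\<^esub> k) / (\<alpha> k z * \<alpha> (k \<otimes>\<^bsub>G\<^esub> z) (inv\<^bsub>G\<^esub> k))"

lemma (in assoc_proj_rep) map_conj_cocycle:
  assumes \<sigma>: "\<sigma> \<in> Gal_ab" and k: "k \<in> S" and z: "z \<in> S"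
  shows "\<sigma> (conj_cocycle G \<alpha> k z) = \<sigma> (\<alpha> k (inv k)) * inverse (\<sigma> (\<alpha> k z * \<alpha> (k \<otimes> z) (inv k)))"
proof -
  interpret \<sigma>: Qab_automorphism \<sigma> by (fact Qab_automorphism.intro[OF \<sigma>])
  show ?thesis
    unfolding conj_cocycle_def using \<alpha>_Qab[OF k z] \<alpha>_Qab[OF S_mult[OF k z] S_inv[OF k]] \<alpha>_Qab[OF k S_inv[OF k]]
    by (simp add: divide_inverse \<sigma>.mult \<sigma>.inverse)
qed

lemma (in assoc_proj_rep) conj_cocycle_N: "k \<in> S \<Longrightarrow> m \<in> N \<Longrightarrow> conj_cocycle G \<alpha> k m = 1"
  unfolding conj_cocycle_def using \<alpha>_N \<alpha>_nonzero S_inv by simp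

locale assoc_proj_twist = assoc_proj_rep +
  fixes x \<sigma>
  assumes x_C: "x \<in> C" and Gal_\<sigma>: "\<sigma> \<in> Gal_ab" and fixes_\<theta>: "fixes_char G N \<theta> x \<sigma>"
begin

sublocale \<sigma>: Qab_automorphism \<sigma>
  by (fact Qab_automorphism.intro[OF Gal_\<sigma>])

abbreviation Q where "Q \<equiv> twisted_proj G P (x, \<sigma>)"

lemma x_carrier: "x \<in> carrier G"
  using H_carrier[OF x_C] .

lemma conj_x_S: "y \<in> S \<Longrightarrow> x \<otimes> y \<otimes> inv x \<in> S"
  using conj_mem_stab[OF x_C Gal_\<sigma> fixes_\<theta>] .

lemma conj_x_N: "n \<in> N \<Longrightarrow> x \<otimes> n \<otimes> inv x \<in> N"
  using conj_closed[OF x_C] .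

lemma conj_x_mult: "y \<in> carrier G \<Longrightarrow> z \<in> carrier G \<Longrightarrow>
    x \<otimes> (y \<otimes> z) \<otimes> inv x = (x \<otimes> y \<otimes> inv x) \<otimes> (x \<otimes> z \<otimes> inv x)"
  using x_carrier by (simp add: m_assoc)

lemma Q_eq: "Q y = map_mat \<sigma> (P (x \<otimes> y \<otimes> inv x))"
  unfolding twisted_proj_def by simp

lemma Q_carrier: "y \<in> S \<Longrightarrow> Q y \<in> carrier_mat d d"
  using P_carrier[OF conj_x_S] Q_eq by simp

lemma Q_mult:
  "y \<in> S \<Longrightarrow> z \<in> S \<Longrightarrow> Q y * Q z = \<sigma> (\<alpha> (x \<otimes> y \<otimes> inv x) (x \<otimes> z \<otimes> inv x)) \<cdot>\<^sub>m Q (y \<otimes> z)"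
  unfolding Q_eq using map_P_mult[OF Gal_\<sigma> conj_x_S conj_x_S] conj_x_mult S_carrier by simp

lemma Q_one: "Q \<one> = 1\<^sub>m d"
  unfolding Q_eq using x_carrier P_one by simp

lemma Q_mult_N_left: "n \<in> N \<Longrightarrow> y \<in> S \<Longrightarrow> Q (n \<otimes> y) = Q n * Q y"
  and Q_mult_N_right: "n \<in> N \<Longrightarrow> y \<in> S \<Longrightarrow> Q (y \<otimes> n) = Q y * Q n"
proof -
  assume n: "n \<in> N" and y: "y \<in> S"
  have xn: "x \<otimes> n \<otimes> inv x \<in> S" and xy: "x \<otimes> y \<otimes> inv x \<in> S"
    using conj_x_S N_subset_S n y by auto
  have map_mult: "map_mat \<sigma> (P u * P v) = map_mat \<sigma> (P u) * map_mat \<sigma> (P v)" if "u \<in> S" "v \<in> S" for u v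
    using \<sigma>.map_mat_mult[OF P_Qab_mat[OF that(1)] P_Qab_mat[OF that(2)]] P_carrier[OF that(1)] P_carrier[OF that(2)]
    by simp
  show "Q (n \<otimes> y) = Q n * Q y"
    unfolding Q_eq using conj_x_mult[OF N_carrier[OF n] S_carrier[OF y]]
      P_mult_N_left[OF conj_x_N[OF n] xy] map_mult[OF xn xy] by simp
  show "Q (y \<otimes> n) = Q y * Q n"
    unfolding Q_eq using conj_x_mult[OF S_carrier[OF y] N_carrier[OF n]]
      P_mult_N_right[OF conj_x_N[OF n] xy] map_mult[OF xy xn] by simp
qed

lemma Q_rep: "is_rep G N d Q"
  unfolding is_rep_def using Q_carrier N_subset_S Q_one Q_mult_N_left by auto

lemma Q_trace: "n \<in> N \<Longrightarrow> mtrace (Q n) = \<theta> n"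
  unfolding Q_eq
  using \<sigma>.mtrace_map_mat[OF P_Qab_mat P_carrier] conj_x_S N_subset_S P_trace[OF conj_x_N] fixes_\<theta>
  unfolding fixes_char_iff by auto

lemma Q_nonzero: "y \<in> S \<Longrightarrow> Q y \<noteq> 0\<^sub>m d d"
proof
  assume y: "y \<in> S" and "Q y = 0\<^sub>m d d"
  hence "\<sigma> (\<alpha> (x \<otimes> y \<otimes> inv x) (x \<otimes> inv y \<otimes> inv x)) \<cdot>\<^sub>m 1\<^sub>m d = 0\<^sub>m d d"
    using Q_mult[OF y S_inv[OF y]] Q_carrier[OF S_inv[OF y]] S_carrier[OF y] Q_one by simp
  moreover have "a \<cdot>\<^sub>m 1\<^sub>m d = 0\<^sub>m d d \<Longrightarrow> a = 0" for a :: complex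
    using smult_mat_cancel[OF one_carrier_mat one_mat_neq_zero[OF d_pos], of a 0]
    by (simp add: zero_smult_mat[OF one_carrier_mat])
  ultimately show False
    using \<sigma>.nonzero[OF \<alpha>_nonzero[OF conj_x_S[OF y] conj_x_S[OF S_inv[OF y]]]] by blast
qed

lemma Q_equiv:
  obtains L Li where "mat_inverse_pair d L Li" "\<forall>n\<in>N. Q n = Li * P n * L"
proof -
  obtain T Ti where T: "mat_inverse_pair d T Ti" and int: "\<forall>n\<in>N. T * Q n = P n * T"
    using irr_rep_equiv_of_mtrace_eq[OF N_subgroup finite_N P_irr Q_rep] Q_trace P_trace by metis
  have "Q n = Ti * P n * T" if n: "n \<in> N" for n
    using arg_cong[OF int[rule_format, OF n], of "\<lambda>A. Ti * A"] T Q_carrier N_subset_S n P_carrier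
    unfolding mat_inverse_pair_def by auto
  with T that show thesis by blast
qed

lemma Q_eq_smult_conj_P:
  assumes L: "mat_inverse_pair d L Li" and QN: "\<forall>n\<in>N. Q n = Li * P n * L" and y: "y \<in> S"
  obtains c where "Q y = c \<cdot>\<^sub>m (Li * P y * L)"
proof -
  have Lc: "L \<in> carrier_mat d d" "Li \<in> carrier_mat d d" "L * Li = 1\<^sub>m d" "Li * L = 1\<^sub>m d"
    using L unfolding mat_inverse_pair_def by auto
  have Qc: "\<And>z. z \<in> S \<Longrightarrow> Q z \<in> carrier_mat d d" using Q_carrier .
  have PN: "P n = L * (Q n * Li)" if "n \<in> N" for n
    using QN that Lc P_carrier N_subset_S by auto
  let ?A = "L * (Q y * Li)"
  have "?A * P n = P (y \<otimes> n \<otimes> inv y) * ?A" if n: "n \<in> N" for n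
  proof -
    define m where "m = y \<otimes> n \<otimes> inv y"
    have m: "m \<in> N" and ym: "y \<otimes> n = m \<otimes> y"
      unfolding m_def using conj_closed[OF S_C[OF y] n] S_carrier[OF y] N_carrier[OF n] by (simp_all add: m_assoc)
    have "?A * P n = L * (Q (y \<otimes> n) * Li)"
      using PN[OF n] Q_mult_N_right[OF n y] Lc Qc y N_subset_S n by auto
    also have "\<dots> = P m * ?A"
      using PN[OF m] Q_mult_N_left[OF m y] ym Lc Qc y N_subset_S m by auto
    finally show ?thesis unfolding m_def .
  qed
  then obtain c where "?A = c \<cdot>\<^sub>m P y"
    using intertwiner_eq_smult_P[OF y, of ?A] Lc Qc[OF y] by auto
  hence "Li * (?A * L) = c \<cdot>\<^sub>m (Li * P y * L)" using Lc P_carrier[OF y] by simp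
  with that show thesis using Lc Qc[OF y] by simp
qed

lemma mu_condI:
  assumes L: "mat_inverse_pair d L Li" and eq: "\<forall>y\<in>S. Q y = \<nu> y \<cdot>\<^sub>m (Li * P y * L)"
    and N1: "\<forall>n\<in>N. \<nu> n = 1"
  shows "mu_cond G S N d P (x, \<sigma>) (restrict \<nu> S)"
proof -
  have Lc: "L \<in> carrier_mat d d" "Li \<in> carrier_mat d d" using L unfolding mat_inverse_pair_def by auto
  have conj_nonzero: "Li * P y * L \<noteq> 0\<^sub>m d d" if y: "y \<in> S" for y
    using Q_nonzero[OF y] eq y Lc P_carrier[OF y] by auto
  have "\<nu> (n \<otimes> y) = \<nu> y" if n: "n \<in> N" and y: "y \<in> S" for n y
  proof -
    have ny: "n \<otimes> y \<in> S" using S_mult N_subset_S n y by auto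
    have "\<nu> (n \<otimes> y) \<cdot>\<^sub>m (Li * P (n \<otimes> y) * L) = Q n * Q y"
      using eq ny Q_mult_N_left[OF n y] by simp
    also have "\<dots> = \<nu> y \<cdot>\<^sub>m (Li * P (n \<otimes> y) * L)"
      using eq N1 n y N_subset_S L P_carrier[OF y] P_carrier P_mult_N_left[OF n y]
      unfolding mat_inverse_pair_def by auto
    finally show ?thesis
      using smult_mat_cancel[OF _ conj_nonzero[OF ny]] Lc P_carrier[OF ny] by simp
  qed
  moreover have "\<nu> y \<noteq> 0" if "y \<in> S" for y
    using Q_nonzero[OF that] eq that Lc P_carrier[OF that] by (auto simp: zero_smult_mat)
  moreover have "\<exists>L Li. mat_inverse_pair d L Li \<and> (\<forall>y\<in>S. Q y = restrict \<nu> S y \<cdot>\<^sub>m (Li * P y * L))"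
    using L eq by auto
  ultimately show ?thesis
    unfolding mu_cond_iff using N1 S_one subgroup.one_closed[OF N_subgroup] S_mult N_subset_S by auto
qed

lemma mu_cond_exists: "\<exists>\<mu>. mu_cond G S N d P (x, \<sigma>) \<mu>"
proof -
  obtain L Li where L: "mat_inverse_pair d L Li" and QN: "\<forall>n\<in>N. Q n = Li * P n * L"
    using Q_equiv by blast
  define \<nu> where "\<nu> y = (SOME c. Q y = c \<cdot>\<^sub>m (Li * P y * L))" for y
  have \<nu>: "Q y = \<nu> y \<cdot>\<^sub>m (Li * P y * L)" if "y \<in> S" for y
    unfolding \<nu>_def by (rule someI_ex) (metis Q_eq_smult_conj_P[OF L QN that])
  have "\<nu> n = 1" if n: "n \<in> N" for n
  proof -
    have nS: "n \<in> S" using n N_subset_S by auto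
    have "\<nu> n \<cdot>\<^sub>m Q n = 1 \<cdot>\<^sub>m Q n" using \<nu>[OF nS] QN n by simp
    thus ?thesis using smult_mat_cancel[OF Q_carrier[OF nS] Q_nonzero[OF nS]] by blast
  qed
  with mu_condI[OF L] \<nu> show ?thesis by blast
qed

lemma mu_cond_unique:
  assumes \<mu>1: "mu_cond G S N d P (x, \<sigma>) \<mu>1" and \<mu>2: "mu_cond G S N d P (x, \<sigma>) \<mu>2"
  shows "\<mu>1 = \<mu>2"
proof -
  obtain L1 L1i where L1: "mat_inverse_pair d L1 L1i" and eq1: "\<forall>y\<in>S. Q y = \<mu>1 y \<cdot>\<^sub>m (L1i * P y * L1)"
    using \<mu>1 unfolding mu_cond_iff by blast
  obtain L2 L2i where L2: "mat_inverse_pair d L2 L2i" and eq2: "\<forall>y\<in>S. Q y = \<mu>2 y \<cdot>\<^sub>m (L2i * P y * L2)"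
    using \<mu>2 unfolding mu_cond_iff by blast
  have "\<forall>n\<in>N. L1i * P n * L1 = L2i * P n * L2"
    using eq1 eq2 mu_cond_N[OF \<mu>1] mu_cond_N[OF \<mu>2] N_subset_S by force
  hence conj_eq: "L1i * P y * L1 = L2i * P y * L2" if "y \<in> S" for y
    using conj_eq_of_conj_eq_on_N[OF L1 L2] P_carrier[OF that] by blast
  have "\<mu>1 y = \<mu>2 y" if y: "y \<in> S" for y
  proof -
    have W: "L1i * P y * L1 \<in> carrier_mat d d" using L1 P_carrier[OF y] unfolding mat_inverse_pair_def by auto
    have "L1i * P y * L1 \<noteq> 0\<^sub>m d d" using Q_nonzero[OF y] eq1 y W by (auto simp: zero_smult_mat)
    with eq1 eq2 conj_eq y show ?thesis using smult_mat_cancel[OF W] by metis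
  qed
  then show ?thesis using \<mu>1 \<mu>2 unfolding mu_cond_def by (auto intro: extensionalityI)
qed

lemma mu_cond_mu: "mu_cond G S N d P (x, \<sigma>) (mu G S N d P (x, \<sigma>))"
  unfolding mu_def using mu_cond_exists mu_cond_unique by (metis theI)

lemma mu_eqI:
  assumes "mat_inverse_pair d L Li" "\<forall>y\<in>S. Q y = \<nu> y \<cdot>\<^sub>m (Li * P y * L)" "\<forall>n\<in>N. \<nu> n = 1"
    and y: "y \<in> S"
  shows "mu G S N d P (x, \<sigma>) y = \<nu> y"
  using mu_cond_unique[OF mu_cond_mu mu_condI[OF assms(1-3)]] y by simp

lemma twisted_proj_mult_left_conj:
  assumes k: "k \<in> S" and y: "y \<in> S"
  shows "twisted_proj G P (k \<otimes> x, \<sigma>) y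
       = inverse (\<sigma> (\<alpha> k (x \<otimes> y \<otimes> inv x) * \<alpha> (k \<otimes> (x \<otimes> y \<otimes> inv x)) (inv k)))
           \<cdot>\<^sub>m (map_mat \<sigma> (P k) * Q y * map_mat \<sigma> (P (inv k)))"
proof -
  define z where "z = x \<otimes> y \<otimes> inv x"
  have z: "z \<in> S" and kz: "k \<otimes> z \<in> S" and ik: "inv k \<in> S"
    using conj_x_S[OF y] S_mult[OF k] S_inv[OF k] unfolding z_def by auto
  have "\<sigma> (\<alpha> k z * \<alpha> (k \<otimes> z) (inv k)) \<noteq> 0"
    using \<sigma>.nonzero \<alpha>_nonzero[OF k z] \<alpha>_nonzero[OF kz ik] by simp
  moreover have "twisted_proj G P (k \<otimes> x, \<sigma>) y = map_mat \<sigma> (P (k \<otimes> z \<otimes> inv k))"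
    using twisted_proj_mult_left[OF S_carrier[OF k] x_carrier S_carrier[OF y]]
    unfolding twisted_proj_def z_def by simp
  ultimately show ?thesis
    using map_P_conj[OF Gal_\<sigma> k z] P_carrier[OF S_mult[OF kz ik]] unfolding Q_eq z_def[symmetric] by simp
qed

lemma mu_mult_left:
  assumes k: "k \<in> S" and y: "y \<in> S"
  shows "mu G S N d P (k \<otimes> x, \<sigma>) y = mu G S N d P (x, \<sigma>) y * \<sigma> (conj_cocycle G \<alpha> k (x \<otimes> y \<otimes> inv x))"
proof -
  interpret kx: assoc_proj_twist G C N \<theta> d P \<alpha> "k \<otimes> x" \<sigma>
    using subgroup.m_closed[OF subgroup_C S_C[OF k] x_C] fixes_char_mult_left[OF k x_C fixes_\<theta>] Gal_\<sigma>
    by (intro assoc_proj_twist.intro assoc_proj_twist_axioms.intro assoc_proj_rep_axioms) auto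
  let ?\<mu> = "mu G S N d P (x, \<sigma>)"
  have ik: "inv k \<in> S" using S_inv[OF k] .
  obtain L Li where L: "mat_inverse_pair d L Li" and eq: "\<forall>y\<in>S. Q y = ?\<mu> y \<cdot>\<^sub>m (Li * P y * L)"
    using mu_cond_mu unfolding mu_cond_iff by blast
  have Lc: "L \<in> carrier_mat d d" "Li \<in> carrier_mat d d" "Li * L = 1\<^sub>m d"
    using L unfolding mat_inverse_pair_def by auto
  define s where "s = \<sigma> (\<alpha> k (inv k))"
  define K Ki where "K = map_mat \<sigma> (P k)" and "Ki = inverse s \<cdot>\<^sub>m map_mat \<sigma> (P (inv k))"
  have s: "s \<noteq> 0" unfolding s_def using \<sigma>.nonzero \<alpha>_nonzero[OF k ik] by simp
  have Kc: "K \<in> carrier_mat d d" "Ki \<in> carrier_mat d d" "K * Ki = 1\<^sub>m d"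
    unfolding K_def Ki_def s_def using P_carrier[OF k] P_carrier[OF ik] s[unfolded s_def]
      map_P_mult[OF Gal_\<sigma> k ik] S_carrier[OF k] P_one by auto
  have "(K * Li) * (L * Ki) = 1\<^sub>m d" using Kc Lc by simp
  hence L': "mat_inverse_pair d (L * Ki) (K * Li)"
    using mat_mult_left_right_inverse[of "K * Li" d "L * Ki"] Kc Lc unfolding mat_inverse_pair_def by auto
  define \<nu> where "\<nu> y = ?\<mu> y * \<sigma> (conj_cocycle G \<alpha> k (x \<otimes> y \<otimes> inv x))" for y
  have "kx.Q y = \<nu> y \<cdot>\<^sub>m (K * Li * P y * (L * Ki))" if y: "y \<in> S" for y
  proof -
    have "map_mat \<sigma> (P (inv k)) = s \<cdot>\<^sub>m Ki" unfolding Ki_def using s by simp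
    then show ?thesis
      using twisted_proj_mult_left_conj[OF k y] eq y Kc Lc P_carrier[OF y]
        map_conj_cocycle[OF Gal_\<sigma> k conj_x_S[OF y]]
      unfolding \<nu>_def K_def[symmetric] s_def[symmetric] by (simp add: ac_simps)
  qed
  moreover have "\<nu> n = 1" if "n \<in> N" for n
    unfolding \<nu>_def using mu_cond_N[OF mu_cond_mu that] conj_cocycle_N[OF k conj_x_N[OF that]] by simp
  ultimately have "mu G S N d P (k \<otimes> x, \<sigma>) y = \<nu> y" using kx.mu_eqI[OF L', of \<nu> y] y by blast
  thus ?thesis unfolding \<nu>_def .
qed

end

lemma assoc_proj_rep_of_H_triple:
  assumes "group G" "finite (carrier G)" "H_triple p G H N \<theta>"
    and "proj_rep G (stab G H N \<theta>) d P \<alpha>" "assoc_proj G (stab G H N \<theta>) N \<theta> d P"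
    and "\<forall>x\<in>stab G H N \<theta>. \<forall>i<d. \<forall>j<d. P x $$ (i, j) \<in> Qab"
    and "\<forall>x\<in>stab G H N \<theta>. \<forall>y\<in>stab G H N \<theta>. root_of_unity (\<alpha> x y)"
  shows "assoc_proj_rep G H N \<theta> d P \<alpha>"
  using assms unfolding H_triple_def by (intro assoc_proj_rep.intro assoc_proj_rep_axioms.intro) auto

lemma mu_agree_mult_left:
  assumes P: "assoc_proj_rep G C N \<theta> d P \<alpha>" and P': "assoc_proj_rep G C' N' \<theta>' d' P' \<alpha>'"
    and K_sub: "stab G C' N' \<theta>' \<subseteq> stab G C N \<theta>"
    and \<alpha>_eq: "\<forall>u\<in>stab G C' N' \<theta>'. \<forall>v\<in>stab G C' N' \<theta>'. \<alpha> u v = \<alpha>' u v"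
    and x: "x \<in> C" "x \<in> C'" and \<sigma>: "\<sigma> \<in> Gal_ab"
    and fixes_x: "fixes_char G N \<theta> x \<sigma>" "fixes_char G N' \<theta>' x \<sigma>"
    and k: "k \<in> stab G C' N' \<theta>'" and h: "h \<in> stab G C' N' \<theta>'"
    and agree: "mu G (stab G C N \<theta>) N d P (x, \<sigma>) h = mu G (stab G C' N' \<theta>') N' d' P' (x, \<sigma>) h"
  shows "mu G (stab G C N \<theta>) N d P (k \<otimes>\<^bsub>G\<^esub> x, \<sigma>) h
       = mu G (stab G C' N' \<theta>') N' d' P' (k \<otimes>\<^bsub>G\<^esub> x, \<sigma>) h"
proof -
  interpret T: assoc_proj_twist G C N \<theta> d P \<alpha> x \<sigma>
    using P x \<sigma> fixes_x by (intro assoc_proj_twist.intro assoc_proj_twist_axioms.intro) auto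
  interpret T': assoc_proj_twist G C' N' \<theta>' d' P' \<alpha>' x \<sigma>
    using P' x \<sigma> fixes_x by (intro assoc_proj_twist.intro assoc_proj_twist_axioms.intro) auto
  let ?z = "x \<otimes>\<^bsub>G\<^esub> h \<otimes>\<^bsub>G\<^esub> inv\<^bsub>G\<^esub> x"
  have z: "?z \<in> stab G C' N' \<theta>'" using T'.conj_x_S[OF h] .
  have "conj_cocycle G \<alpha> k ?z = conj_cocycle G \<alpha>' k ?z"
    unfolding conj_cocycle_def using \<alpha>_eq k z T'.S_inv T'.S_mult by simp
  then show ?thesis
    using T.mu_mult_left[OF subsetD[OF K_sub k] subsetD[OF K_sub h]] T'.mu_mult_left[OF k h] agree by simp
qed

theorem lemma1p8:
  fixes p :: nat and G :: "'g monoid" and N H M :: "'g set"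
    and \<theta> \<phi> :: "'g \<Rightarrow> complex"
    and d d' :: nat and P P' :: "'g \<Rightarrow> complex mat" and \<alpha> \<alpha>' :: "'g \<Rightarrow> 'g \<Rightarrow> complex"
  assumes "Factorial_Ring.prime p" and "group G" and "finite (carrier G)"
    and "H_triple p G (carrier G) N \<theta>"
    and "H_triple p G H M \<phi>"
    and "carrier G = N <#>\<^bsub>G\<^esub> H" and "N \<inter> H = M" and "centralizer_in G N \<subseteq> H"
    and "stab_pair p G H N \<theta> = stab_pair p G H M \<phi>"
    and "proj_rep G (stab G (carrier G) N \<theta>) d P \<alpha>"
    and "assoc_proj G (stab G (carrier G) N \<theta>) N \<theta> d P"
    and "\<forall>x\<in>stab G (carrier G) N \<theta>. \<forall>i<d. \<forall>j<d. P x $$ (i, j) \<in> Qab"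
    and "\<forall>x\<in>stab G (carrier G) N \<theta>. \<forall>y\<in>stab G (carrier G) N \<theta>. root_of_unity (\<alpha> x y)"
    and "proj_rep G (stab G H M \<phi>) d' P' \<alpha>'"
    and "assoc_proj G (stab G H M \<phi>) M \<phi> d' P'"
    and "\<forall>x\<in>stab G H M \<phi>. \<forall>i<d'. \<forall>j<d'. P' x $$ (i, j) \<in> Qab"
    and "\<forall>x\<in>stab G H M \<phi>. \<forall>y\<in>stab G H M \<phi>. root_of_unity (\<alpha>' x y)"
    and "\<forall>x\<in>stab G H N \<theta>. \<forall>y\<in>stab G H N \<theta>. \<alpha> x y = \<alpha>' x y"
    and "\<forall>c\<in>centralizer_in G N. \<exists>z. P c = z \<cdot>\<^sub>m 1\<^sub>m d \<and> P' c = z \<cdot>\<^sub>m 1\<^sub>m d'"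
  shows "(\<forall>a\<in>stab_pair p G H N \<theta>. \<forall>h\<in>stab G H N \<theta>.
             mu G (stab G (carrier G) N \<theta>) N d P a h = mu G (stab G H M \<phi>) M d' P' a h)
         \<longleftrightarrow> (\<exists>T. coset_transversal G (stab G H N \<theta>) (stab_pair p G H N \<theta>) T \<and>
             (\<forall>a\<in>T. \<forall>h\<in>stab G H N \<theta>.
             mu G (stab G (carrier G) N \<theta>) N d P a h = mu G (stab G H M \<phi>) M d' P' a h))"
proof -
  interpret group G by fact
  have P: "assoc_proj_rep G (carrier G) N \<theta> d P \<alpha>" and P': "assoc_proj_rep G H M \<phi> d' P' \<alpha>'"
    using assoc_proj_rep_of_H_triple assms(2-5,10-17) by blast+
  interpret N: assoc_proj_rep G "carrier G" N \<theta> d P \<alpha> by (fact P)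
  interpret HN: subgroup_normalizing G H N
    using N.subgroup_normalizing_subgroup assms(5) subgroup.subset unfolding H_triple_def by blast
  have K_eq: "stab G H M \<phi> = stab G H N \<theta>" using stab_eq_of_stab_pair_eq[OF assms(9)] by simp
  have K_sub: "stab G H N \<theta> \<subseteq> stab G (carrier G) N \<theta>" unfolding stab_def using HN.H_carrier by auto
  show ?thesis
  proof (rule ball_iff_ex_coset_transversal[OF HN.stab_subgroup])
    fix a k assume a: "a \<in> stab_pair p G H N \<theta>" and k: "k \<in> stab G H N \<theta>"
    obtain x \<sigma> where a_eq: "a = (x, \<sigma>)" by fastforce
    have x: "x \<in> H" "\<sigma> \<in> Gal_ab" "fixes_char G N \<theta> x \<sigma>" "fixes_char G M \<phi> x \<sigma>"
      using stab_pair_memD a assms(9) unfolding a_eq by metis+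
    show "\<forall>h\<in>stab G H N \<theta>. mu G (stab G (carrier G) N \<theta>) N d P (k \<otimes>\<^bsub>G\<^esub> fst a, snd a) h
                                = mu G (stab G H M \<phi>) M d' P' (k \<otimes>\<^bsub>G\<^esub> fst a, snd a) h"
      if "\<forall>h\<in>stab G H N \<theta>. mu G (stab G (carrier G) N \<theta>) N d P a h = mu G (stab G H M \<phi>) M d' P' a h"
      using that mu_agree_mult_left[OF P P'] x k K_sub assms(18) HN.H_carrier unfolding K_eq a_eq by auto
  qed (use stab_pair_memD HN.H_carrier in fastforce)
qed

end
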